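(* Let $g\ge2$. For a stable weighted graph ${\bf G}$ of genus $g$ (no markings) and a vertex $v$, put $\chi(v)=2w(v)-2+\mathrm{val}(v)$, and let ${\bf G}_v$ be the $1$-marked graph obtained by marking $v$. The linear maps $[{\bf G},\omega]\mapsto\sum_{v\in V({\bf G})}\chi(v)[{\bf G}_v,\omega]$ define a homomorphism of cellular chain complexes $t\colon C_*(\Delta_g;\mathbb Q)\to C_*(\Delta_{g,1};\mathbb Q)$. It carries the subcomplex spanned by graphs with a vertex of positive weight into the corresponding subcomplex, hence descends to a chain map $G^{(g)}\to G^{(g,1)}$ (via the identifications of the quotients with graph complexes, shifted by $2g-1$), and the induced maps $\widetilde H_k(\Delta_g;\mathbb Q)\to\widetilde H_k(\Delta_{g,1};\mathbb Q)$ and $H_k(G^{(g)})\to H_k(G^{(g,1)})$ are injective for all $k$.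
   Context: $\Delta_{g,n}$ ($\Delta_g=\Delta_{g,0}$) is the symmetric $\Delta$-complex whose $p$-simplices are isomorphism classes of $({\bf G},\omega)$: ${\bf G}=(G,m,w)$ a connected graph (loops, parallel edges allowed) with weights $w\colon V(G)\to\mathbb Z_{\ge0}$, marking $m\colon\{1,\dots,n\}\to V(G)$, $b_1(G)+\sum w=g$, stable ($2w(v)-2+\mathrm{val}(v)>0$, val counting half-edges with loops twice plus markings), and $\omega\colon E(G)\to\{0,\dots,p\}$ a bijection; faces contract edges with omitted labels (weights add; contracting a loop adds $1$). Its cellular chain complex $C_*(\Delta_{g,n};\mathbb Q)$ has generators $[{\bf G},\omega]$ in degree $|E(G)|-1$ with $[{\bf G},\omega]=\mathrm{sgn}(\sigma)[{\bf G}',\omega']$ under isomorphisms relating orders by $\sigma$, differential $\sum_i(-1)^i[{\bf G}/\omega^{-1}(i),\omega|]$, computing reduced rational homology. $G^{(g,n)}$ is the marked graph complex: the quotient of $C_*(\Delta_{g,n};\mathbb Q)$ by the subcomplex spanned by $[{\bf G},\omega]$ with some vertex of positive weight, regraded so that a graph with $e$ edges has degree $e-2g$ (loop contractions then contribute zero). *)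

theory Defs
  imports Complex_Main "HOL-Combinatorics.Permutations"
begin

text \<open>A weighted marked graph with ordered edges. Vertices are 0..<nV G.
  The edge list gives the edges in the order of their labels (edge with list
  index i has label i). Each edge is a pair of endpoints (unordered: only
  the set of endpoints matters; a loop has equal endpoints). The weight list
  has one entry per vertex; the mark list gives, for marking i+1, its vertex.\<close>
type_synonym lgraph = "(nat \<times> nat) list \<times> nat list \<times> nat list"

definition edgs :: "lgraph \<Rightarrow> (nat \<times> nat) list" where "edgs G = fst G"
definition wts :: "lgraph \<Rightarrow> nat list" where "wts G = fst (snd G)"
definition mks :: "lgraph \<Rightarrow> nat list" where "mks G = snd (snd G)"
definition nV :: "lgraph \<Rightarrow> nat" where "nV G = length (wts G)"
definition wt :: "lgraph \<Rightarrow> nat \<Rightarrow> nat" where "wt G v = wts G ! v"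
definition ends :: "nat \<times> nat \<Rightarrow> nat set" where "ends e = {fst e, snd e}"

definition val :: "lgraph \<Rightarrow> nat \<Rightarrow> nat" where
  "val G v = length (filter (\<lambda>e. fst e = v) (edgs G)) + length (filter (\<lambda>e. snd e = v) (edgs G))
            + length (filter (\<lambda>u. u = v) (mks G))"

definition adj :: "lgraph \<Rightarrow> (nat \<times> nat) set" where
  "adj G = {(a, b). (a, b) \<in> set (edgs G) \<or> (b, a) \<in> set (edgs G)}"

definition gconnected :: "lgraph \<Rightarrow> bool" where
  "gconnected G \<longleftrightarrow> (\<forall>v < nV G. (0, v) \<in> (adj G)\<^sup>*)"

text \<open>stable connected weighted graph of genus g with n markings;
  genus condition b1 + sum w = g with b1 = |E| - |V| + 1\<close>
definition valid :: "nat \<Rightarrow> nat \<Rightarrow> lgraph \<Rightarrow> bool" where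
  "valid g n G \<longleftrightarrow> nV G \<ge> 1 \<and> (\<forall>e\<in>set (edgs G). fst e < nV G \<and> snd e < nV G)
     \<and> length (mks G) = n \<and> (\<forall>u\<in>set (mks G). u < nV G) \<and> gconnected G
     \<and> length (edgs G) + 1 + sum_list (wts G) = g + nV G
     \<and> (\<forall>v < nV G. 2 * wt G v + val G v > 2)"

definition iso :: "lgraph \<Rightarrow> lgraph \<Rightarrow> (nat \<Rightarrow> nat) \<Rightarrow> (nat \<Rightarrow> nat) \<Rightarrow> bool" where
  "iso G G' p s \<longleftrightarrow> nV G' = nV G \<and> length (edgs G') = length (edgs G)
     \<and> bij_betw p {..<nV G} {..<nV G} \<and> s permutes {..<length (edgs G)}
     \<and> (\<forall>v < nV G. wt G' (p v) = wt G v)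
     \<and> length (mks G') = length (mks G) \<and> (\<forall>i < length (mks G). mks G' ! i = p (mks G ! i))
     \<and> (\<forall>i < length (edgs G). ends (edgs G' ! s i) = p ` ends (edgs G ! i))"

text \<open>contraction of the edge with label i; remaining edges keep their relative order
  (labels renormalised monotonically); a non-loop edge (a,b) merges b into a and
  vertices above b are shifted down by one\<close>
definition contract :: "lgraph \<Rightarrow> nat \<Rightarrow> lgraph" where
  "contract G i =
    (let a = fst (edgs G ! i); b = snd (edgs G ! i);
         es = take i (edgs G) @ drop (Suc i) (edgs G) in
     if a = b then (es, (wts G)[a := wts G ! a + 1], mks G)
     else (let f = (\<lambda>v. let v' = (if v = b then a else v) in if v' > b then v' - 1 else v') in
       (map (\<lambda>(x, y). (f x, f y)) es,
        map (\<lambda>j. sum_list (map (\<lambda>v. wts G ! v) (filter (\<lambda>v. f v = j) [0..<nV G]))) [0..<nV G - 1],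
        map f (mks G))))"

text \<open>rational chains: finitely supported functions on representatives\<close>
definition delta :: "lgraph \<Rightarrow> lgraph \<Rightarrow> rat" where
  "delta x = (\<lambda>y. if y = x then 1 else 0)"

definition lin :: "(lgraph \<Rightarrow> lgraph \<Rightarrow> rat) \<Rightarrow> (lgraph \<Rightarrow> rat) \<Rightarrow> (lgraph \<Rightarrow> rat)" where
  "lin F c = (\<lambda>y. \<Sum>x\<in>{x. c x \<noteq> 0}. c x * F x y)"

definition qspan :: "('a \<Rightarrow> rat) set \<Rightarrow> ('a \<Rightarrow> rat) set" where
  "qspan S = {c. \<exists>F a. finite F \<and> F \<subseteq> S \<and> c = (\<lambda>y. \<Sum>x\<in>F. a x * x y)}"

definition sadd :: "('a \<Rightarrow> rat) set \<Rightarrow> ('a \<Rightarrow> rat) set \<Rightarrow> ('a \<Rightarrow> rat) set" where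
  "sadd A B = {(\<lambda>y. x y + z y) | x z. x \<in> A \<and> z \<in> B}"

definition dgen :: "lgraph \<Rightarrow> lgraph \<Rightarrow> rat" where
  "dgen G = (\<lambda>y. \<Sum>i<length (edgs G). (-1) ^ i * delta (contract G i) y)"

definition chi :: "lgraph \<Rightarrow> nat \<Rightarrow> int" where
  "chi G v = 2 * int (wt G v) - 2 + int (val G v)"

definition markv :: "lgraph \<Rightarrow> nat \<Rightarrow> lgraph" where
  "markv G v = (edgs G, wts G, [v])"

definition tgen :: "lgraph \<Rightarrow> lgraph \<Rightarrow> rat" where
  "tgen G = (\<lambda>y. \<Sum>v<nV G. of_int (chi G v) * delta (markv G v) y)"

text \<open>free module on representatives with e edges (cellular degree e - 1)\<close>
definition chains :: "nat \<Rightarrow> nat \<Rightarrow> nat \<Rightarrow> (lgraph \<Rightarrow> rat) set" where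
  "chains g n e = qspan {delta G | G. valid g n G \<and> length (edgs G) = e}"

text \<open>relations [G,w] = sgn(s) [G',w']; C_* is the quotient chains/rels\<close>
definition rels :: "nat \<Rightarrow> nat \<Rightarrow> nat \<Rightarrow> (lgraph \<Rightarrow> rat) set" where
  "rels g n e = qspan {(\<lambda>y. delta G y - of_int (sign s) * delta G' y) | G G' p s.
                        valid g n G \<and> length (edgs G) = e \<and> iso G G' p s}"

definition posw :: "nat \<Rightarrow> nat \<Rightarrow> nat \<Rightarrow> (lgraph \<Rightarrow> rat) set" where
  "posw g n e = qspan {delta G | G. valid g n G \<and> length (edgs G) = e \<and> (\<exists>v < nV G. wt G v > 0)}"

definition bnd :: "nat \<Rightarrow> nat \<Rightarrow> nat \<Rightarrow> (lgraph \<Rightarrow> rat) set" where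
  "bnd g n e = lin dgen ` chains g n (Suc e)"

end

theory Submission
  imports Defs
begin

text \<open>Forgetting the marking defines a map \<open>s\<close> back from one-marked to unmarked graphs: \<open>s[H]\<close>
  is the underlying unmarked graph if that graph is still stable, and \<open>0\<close> otherwise. Each marked
  graph \<open>G\<^sub>v\<close> occurring in \<open>t[G]\<close> forgets back to \<open>G\<close>, so \<open>s(t[G]) = (\<Sum>\<^sub>v \<chi>(v)) [G] = (2g - 2) [G]\<close>,
  which is invertible for \<open>g \<ge> 2\<close>. Moreover \<open>s\<close> commutes with the differentials up to the
  orientation relations: forgetting the mark only fails to give a stable graph when the marked
  vertex has weight \<open>0\<close> and exactly two half-edges, on two distinct non-loop edges (a loop would
  make the graph a single vertex of genus \<open>\<le> 1\<close>), and contracting either of these two edges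
  gives the same unmarked graph, entering the differential with opposite orientations. Hence
  \<open>t\<close> has a left inverse up to relations and boundaries, and so reflects boundaries, in the
  complexes \<open>C\<^sub>*(\<Delta>)\<close> as well as modulo graphs with a vertex of positive weight.\<close>

section \<open>Finitely supported rational chains\<close>

text \<open>\<open>lin F\<close> extends \<open>F\<close> linearly only on finitely supported chains: for infinite support the
  defining sum is \<open>0\<close>.\<close>
definition supp :: "('a \<Rightarrow> rat) \<Rightarrow> 'a set" where "supp c = {x. c x \<noteq> 0}"

abbreviation finsupp :: "('a \<Rightarrow> rat) \<Rightarrow> bool" where "finsupp c \<equiv> finite (supp c)"

lemma supp_add: "supp (\<lambda>y. c y + d y) \<subseteq> supp c \<union> supp d"
  by (auto simp: supp_def)

lemma finsupp_zero: "finsupp (\<lambda>_. 0)"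
  by (simp add: supp_def)

lemma finsupp_delta: "finsupp (delta x)"
  by (simp add: supp_def delta_def)

lemma finsupp_add: "finsupp c \<Longrightarrow> finsupp d \<Longrightarrow> finsupp (\<lambda>y. c y + d y)"
  by (rule finite_subset[OF supp_add]) auto

lemma finsupp_scale: "finsupp c \<Longrightarrow> finsupp (\<lambda>y. r * c y)"
  by (rule rev_finite_subset) (auto simp: supp_def)

lemma finsupp_delta_diff: "finsupp (\<lambda>y. delta G y - r * delta G' y)"
  using finsupp_add[OF finsupp_delta finsupp_scale[OF finsupp_delta, of "- r"]] by simp

lemma finsupp_sum:
  "finite A \<Longrightarrow> (\<And>x. x \<in> A \<Longrightarrow> finsupp (k x)) \<Longrightarrow> finsupp (\<lambda>y. \<Sum>x\<in>A. a x * k x y)"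
proof (induction A rule: finite_induct)
  case empty
  then show ?case by (simp add: finsupp_zero)
next
  case (insert x A)
  then have "finsupp (\<lambda>y. a x * k x y + (\<Sum>x\<in>A. a x * k x y))"
    by (intro finsupp_add finsupp_scale) auto
  then show ?case using insert by simp
qed

lemma lin_eq_sum:
  assumes "finite S" "supp c \<subseteq> S"
  shows "lin F c y = (\<Sum>x\<in>S. c x * F x y)"
  unfolding lin_def
  by (rule sum.mono_neutral_left) (use assms in \<open>auto simp: supp_def\<close>)

lemma lin_zero: "lin F (\<lambda>_. 0) = (\<lambda>_. 0)"
  by (simp add: lin_def)

lemma lin_delta: "lin F (delta x) = F x"
proof
  fix y
  have "lin F (delta x) y = (\<Sum>z\<in>{x}. delta x z * F z y)"
    by (rule lin_eq_sum) (auto simp: supp_def delta_def)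
  then show "lin F (delta x) y = F x y"
    by (simp add: delta_def)
qed

lemma lin_delta_self: "finsupp c \<Longrightarrow> lin delta c = c"
proof
  fix y
  assume "finsupp c"
  then have "lin delta c y = (\<Sum>x\<in>supp c \<union> {y}. c x * delta x y)"
    by (intro lin_eq_sum) auto
  also have "\<dots> = (\<Sum>x\<in>supp c \<union> {y}. if x = y then c y else 0)"
    by (rule sum.cong) (auto simp: delta_def)
  also have "\<dots> = c y"
    using \<open>finsupp c\<close> by simp
  finally show "lin delta c y = c y" .
qed

lemma lin_add:
  assumes "finsupp c" "finsupp d"
  shows "lin F (\<lambda>y. c y + d y) = (\<lambda>y. lin F c y + lin F d y)"
proof
  fix y
  let ?S = "supp c \<union> supp d"
  have "lin F (\<lambda>y. c y + d y) y = (\<Sum>x\<in>?S. (c x + d x) * F x y)"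
    using assms supp_add[of c d] by (intro lin_eq_sum) auto
  also have "\<dots> = (\<Sum>x\<in>?S. c x * F x y) + (\<Sum>x\<in>?S. d x * F x y)"
    by (simp add: distrib_right sum.distrib)
  also have "\<dots> = lin F c y + lin F d y"
    using assms by (simp add: lin_eq_sum[of ?S])
  finally show "lin F (\<lambda>y. c y + d y) y = lin F c y + lin F d y" .
qed

lemma lin_scale:
  assumes "finsupp c"
  shows "lin F (\<lambda>y. r * c y) = (\<lambda>y. r * lin F c y)"
proof
  fix y
  have "lin F (\<lambda>y. r * c y) y = (\<Sum>x\<in>supp c. (r * c x) * F x y)"
    using assms by (intro lin_eq_sum) (auto simp: supp_def)
  also have "\<dots> = r * lin F c y"
    using assms by (simp add: lin_eq_sum sum_distrib_left mult.assoc)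
  finally show "lin F (\<lambda>y. r * c y) y = r * lin F c y" .
qed

lemma lin_delta_diff: "lin F (\<lambda>y. delta G y - r * delta G' y) = (\<lambda>y. F G y - r * F G' y)"
proof -
  have sum: "lin F (\<lambda>y. delta G y + (- r) * delta G' y)
      = (\<lambda>y. lin F (delta G) y + lin F (\<lambda>y. (- r) * delta G' y) y)"
    by (rule lin_add[OF finsupp_delta finsupp_scale[OF finsupp_delta]])
  have scale: "lin F (\<lambda>y. (- r) * delta G' y) = (\<lambda>y. (- r) * F G' y)"
    unfolding lin_scale[OF finsupp_delta] lin_delta ..
  show ?thesis
    using sum unfolding scale lin_delta by simp
qed

lemma lin_sum:
  assumes "finite A" "\<And>x. x \<in> A \<Longrightarrow> finsupp (k x)"
  shows "lin F (\<lambda>y. \<Sum>x\<in>A. a x * k x y) = (\<lambda>y. \<Sum>x\<in>A. a x * lin F (k x) y)"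
  using assms
proof (induction A rule: finite_induct)
  case empty
  then show ?case by (simp add: lin_zero)
next
  case (insert x A)
  have "finsupp (\<lambda>y. a x * k x y)" "finsupp (\<lambda>y. \<Sum>x\<in>A. a x * k x y)"
    using insert by (auto intro: finsupp_scale finsupp_sum)
  then have "lin F (\<lambda>y. a x * k x y + (\<Sum>x\<in>A. a x * k x y))
      = (\<lambda>y. a x * lin F (k x) y + lin F (\<lambda>y. \<Sum>x\<in>A. a x * k x y) y)"
    using insert by (simp add: lin_add lin_scale)
  then show ?case using insert by simp
qed

lemma lin_sum_delta:
  "finite A \<Longrightarrow> lin F (\<lambda>y. \<Sum>x\<in>A. a x * delta (h x) y) = (\<lambda>y. \<Sum>x\<in>A. a x * F (h x) y)"
  using lin_sum[of A "\<lambda>x. delta (h x)" F a] by (simp add: finsupp_delta lin_delta)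

lemma finsupp_lin:
  assumes "finsupp c" "\<And>x. finsupp (F x)"
  shows "finsupp (lin F c)"
proof -
  have "lin F c = (\<lambda>y. \<Sum>x\<in>supp c. c x * F x y)"
    using assms by (intro ext lin_eq_sum) auto
  then show ?thesis
    using assms by (simp add: finsupp_sum)
qed

lemma lin_lin:
  assumes "finsupp c" "\<And>x. finsupp (B x)"
  shows "lin A (lin B c) = lin (\<lambda>x. lin A (B x)) c"
proof -
  have "lin B c = (\<lambda>y. \<Sum>x\<in>supp c. c x * B x y)"
    using assms by (intro ext lin_eq_sum) auto
  then have "lin A (lin B c) = (\<lambda>y. \<Sum>x\<in>supp c. c x * lin A (B x) y)"
    using lin_sum[of "supp c" B A c] assms by simp
  also have "\<dots> = lin (\<lambda>x. lin A (B x)) c"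
    by (simp add: lin_def supp_def)
  finally show ?thesis .
qed

lemma lin_cong: "(\<And>x. x \<in> supp c \<Longrightarrow> F x = F' x) \<Longrightarrow> lin F c = lin F' c"
  unfolding lin_def supp_def by (rule ext, rule sum.cong) auto

lemma lin_scale_fun: "lin (\<lambda>x y. r * F x y) c = (\<lambda>y. r * lin F c y)"
  unfolding lin_def by (rule ext) (simp add: sum_distrib_left algebra_simps)

lemma lin_diff_fun: "lin (\<lambda>x y. A x y - B x y) c = (\<lambda>y. lin A c y - lin B c y)"
  unfolding lin_def by (rule ext) (simp add: sum_subtractf algebra_simps)

lemma qspan_zero: "(\<lambda>_. 0) \<in> qspan S"
  unfolding qspan_def by (rule CollectI, rule exI[of _ "{}"]) auto

lemma qspan_induct [consumes 1, case_names zero step]: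
  assumes "c \<in> qspan S" "P (\<lambda>_. 0)"
    and "\<And>x r c. x \<in> S \<Longrightarrow> c \<in> qspan S \<Longrightarrow> P c \<Longrightarrow> P (\<lambda>y. r * x y + c y)"
  shows "P c"
proof -
  obtain F a where F: "finite F" "F \<subseteq> S" "c = (\<lambda>y. \<Sum>x\<in>F. a x * x y)"
    using assms(1) unfolding qspan_def by blast
  have "P (\<lambda>y. \<Sum>x\<in>F. a x * x y)"
    using F(1,2)
  proof (induction F rule: finite_induct)
    case empty
    then show ?case using assms(2) by simp
  next
    case (insert x F)
    then have "(\<lambda>y. \<Sum>x\<in>F. a x * x y) \<in> qspan S"
      unfolding qspan_def by blast
    then have "P (\<lambda>y. a x * x y + (\<Sum>x\<in>F. a x * x y))"
      using insert assms(3) by auto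
    then show ?case using insert by simp
  qed
  then show ?thesis using F by simp
qed

lemma qspan_base: "x \<in> S \<Longrightarrow> x \<in> qspan S"
  unfolding qspan_def by (rule CollectI, intro exI[of _ "{x}"] exI[of _ "\<lambda>_. 1"]) auto

lemma qspan_scale: "c \<in> qspan S \<Longrightarrow> (\<lambda>y. r * c y) \<in> qspan S"
  unfolding qspan_def
  by (auto simp: sum_distrib_left mult.assoc intro!: exI[of _ "\<lambda>x. r * _ x"])

lemma qspan_add:
  assumes "c \<in> qspan S" "d \<in> qspan S"
  shows "(\<lambda>y. c y + d y) \<in> qspan S"
proof -
  obtain F a where F: "finite F" "F \<subseteq> S" "c = (\<lambda>y. \<Sum>x\<in>F. a x * x y)"
    using assms(1) unfolding qspan_def by blast
  obtain F' b where F': "finite F'" "F' \<subseteq> S" "d = (\<lambda>y. \<Sum>x\<in>F'. b x * x y)"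
    using assms(2) unfolding qspan_def by blast
  have fin: "finite (F \<union> F')"
    using F F' by simp
  define a' where "a' x = (if x \<in> F then a x else 0) + (if x \<in> F' then b x else 0)" for x
  have "c y + d y = (\<Sum>x\<in>F \<union> F'. a' x * x y)" for y
  proof -
    have "(\<Sum>x\<in>F \<union> F'. a' x * x y)
        = (\<Sum>x\<in>F \<union> F'. if x \<in> F then a x * x y else 0) + (\<Sum>x\<in>F \<union> F'. if x \<in> F' then b x * x y else 0)"
      unfolding sum.distrib[symmetric] by (rule sum.cong) (auto simp: a'_def distrib_right)
    also have "\<dots> = (\<Sum>x\<in>(F \<union> F') \<inter> F. a x * x y) + (\<Sum>x\<in>(F \<union> F') \<inter> F'. b x * x y)"
      by (simp only: sum.inter_restrict[OF fin])
    also have "\<dots> = c y + d y"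
      using F F' by (simp add: Int_absorb1)
    finally show ?thesis by simp
  qed
  then show ?thesis
    unfolding qspan_def using F F' fin by blast
qed

lemma qspan_sum:
  "finite A \<Longrightarrow> (\<And>x. x \<in> A \<Longrightarrow> k x \<in> qspan S) \<Longrightarrow> (\<lambda>y. \<Sum>x\<in>A. a x * k x y) \<in> qspan S"
proof (induction A rule: finite_induct)
  case empty
  then show ?case by (simp add: qspan_zero)
next
  case (insert x A)
  then have "(\<lambda>y. a x * k x y + (\<Sum>x\<in>A. a x * k x y)) \<in> qspan S"
    by (intro qspan_add qspan_scale) auto
  then show ?case using insert by simp
qed

lemma finsupp_qspan: "c \<in> qspan S \<Longrightarrow> (\<And>x. x \<in> S \<Longrightarrow> finsupp x) \<Longrightarrow> finsupp c"
proof (induction c rule: qspan_induct)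
  case zero
  then show ?case by (simp add: finsupp_zero)
next
  case (step x r c)
  then show ?case by (intro finsupp_add finsupp_scale) auto
qed

lemma lin_qspan:
  assumes "c \<in> qspan S" "\<And>x. x \<in> S \<Longrightarrow> finsupp x" "\<And>x. x \<in> S \<Longrightarrow> lin F x \<in> qspan T"
  shows "lin F c \<in> qspan T"
  using assms(1)
proof (induction c rule: qspan_induct)
  case zero
  then show ?case by (simp add: lin_zero qspan_zero)
next
  case (step x r c)
  have "finsupp x" "finsupp c"
    using assms(2) step(1) finsupp_qspan[OF step(2) assms(2)] by auto
  then have "lin F (\<lambda>y. r * x y + c y) = (\<lambda>y. r * lin F x y + lin F c y)"
    by (simp add: lin_add finsupp_scale lin_scale)
  then show ?case
    using step assms(3) by (simp add: qspan_add qspan_scale)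
qed

section \<open>Chain groups of the graph complexes\<close>

lemma delta_in_chains: "valid g n G \<Longrightarrow> length (edgs G) = e \<Longrightarrow> delta G \<in> chains g n e"
  unfolding chains_def by (rule qspan_base) blast

lemma delta_in_posw:
  "valid g n G \<Longrightarrow> length (edgs G) = e \<Longrightarrow> v < nV G \<Longrightarrow> 0 < wt G v \<Longrightarrow> delta G \<in> posw g n e"
  unfolding posw_def by (rule qspan_base) blast

lemma iso_rel_in_rels:
  "valid g n G \<Longrightarrow> length (edgs G) = e \<Longrightarrow> iso G G' p s \<Longrightarrow>
    (\<lambda>y. delta G y - of_int (sign s) * delta G' y) \<in> rels g n e"
  unfolding rels_def by (rule qspan_base) blast

lemma supp_chains: "c \<in> chains g n e \<Longrightarrow> supp c \<subseteq> {G. valid g n G \<and> length (edgs G) = e}"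
  unfolding chains_def
proof (induction c rule: qspan_induct)
  case zero
  then show ?case by (simp add: supp_def)
next
  case (step x r c)
  then obtain G where "x = delta G" "valid g n G" "length (edgs G) = e"
    by blast
  then show ?case
    using step(3) by (auto simp: supp_def delta_def)
qed

lemma finsupp_chains: "c \<in> chains g n e \<Longrightarrow> finsupp c"
  unfolding chains_def by (rule finsupp_qspan) (auto simp: finsupp_delta)

lemma finsupp_rels: "c \<in> rels g n e \<Longrightarrow> finsupp c"
  unfolding rels_def by (rule finsupp_qspan) (auto simp: finsupp_delta_diff)

lemma finsupp_posw: "c \<in> posw g n e \<Longrightarrow> finsupp c"
  unfolding posw_def by (rule finsupp_qspan) (auto simp: finsupp_delta)

lemma lin_chains_qspan:
  assumes "c \<in> chains g n e"
    and "\<And>G. valid g n G \<Longrightarrow> length (edgs G) = e \<Longrightarrow> F G \<in> qspan T"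
  shows "lin F c \<in> qspan T"
  using assms(1) unfolding chains_def
  by (rule lin_qspan) (auto simp: finsupp_delta lin_delta intro: assms(2))

lemma lin_posw_qspan:
  assumes "c \<in> posw g n e"
    and "\<And>G v. valid g n G \<Longrightarrow> length (edgs G) = e \<Longrightarrow> v < nV G \<Longrightarrow> 0 < wt G v \<Longrightarrow> F G \<in> qspan T"
  shows "lin F c \<in> qspan T"
  using assms(1) unfolding posw_def
  by (rule lin_qspan) (auto simp: finsupp_delta lin_delta intro: assms(2))

lemma lin_rels_qspan:
  assumes "c \<in> rels g n e"
    and "\<And>G G' p s. valid g n G \<Longrightarrow> length (edgs G) = e \<Longrightarrow> iso G G' p s \<Longrightarrow>
      (\<lambda>y. F G y - of_int (sign s) * F G' y) \<in> qspan T"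
  shows "lin F c \<in> qspan T"
  using assms(1) unfolding rels_def
  by (rule lin_qspan) (auto simp: finsupp_delta_diff lin_delta_diff intro: assms(2))

lemma rels_scale: "c \<in> rels g n e \<Longrightarrow> (\<lambda>y. r * c y) \<in> rels g n e"
  unfolding rels_def by (rule qspan_scale)

lemma rels_add: "c \<in> rels g n e \<Longrightarrow> d \<in> rels g n e \<Longrightarrow> (\<lambda>y. c y + d y) \<in> rels g n e"
  unfolding rels_def by (rule qspan_add)

section \<open>Edge contraction\<close>

abbreviation remove_nth :: "nat \<Rightarrow> 'a list \<Rightarrow> 'a list" where
  "remove_nth i xs \<equiv> take i xs @ drop (Suc i) xs"

definition end1 :: "lgraph \<Rightarrow> nat \<Rightarrow> nat" where "end1 G i = fst (edgs G ! i)"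
definition end2 :: "lgraph \<Rightarrow> nat \<Rightarrow> nat" where "end2 G i = snd (edgs G ! i)"

text \<open>The relabelling of vertices performed by \<open>contract\<close> on a non-loop edge \<open>(a, b)\<close>.\<close>
definition merge_map :: "nat \<Rightarrow> nat \<Rightarrow> nat \<Rightarrow> nat" where
  "merge_map a b v = (let v' = (if v = b then a else v) in if v' > b then v' - 1 else v')"

abbreviation merge_ends :: "lgraph \<Rightarrow> nat \<Rightarrow> nat \<Rightarrow> nat" where
  "merge_ends G i \<equiv> merge_map (end1 G i) (end2 G i)"

definition edge_val :: "lgraph \<Rightarrow> nat \<Rightarrow> nat" where
  "edge_val G v = length (filter (\<lambda>e. fst e = v) (edgs G)) + length (filter (\<lambda>e. snd e = v) (edgs G))"
definition mark_val :: "lgraph \<Rightarrow> nat \<Rightarrow> nat" where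
  "mark_val G v = length (filter (\<lambda>u. u = v) (mks G))"

definition stab :: "lgraph \<Rightarrow> nat \<Rightarrow> nat" where "stab G v = 2 * wt G v + val G v"

lemma val_eq_edge_mark: "val G v = edge_val G v + mark_val G v"
  by (simp add: val_def edge_val_def mark_val_def)

lemma lgraph_simps [simp]: "edgs (E, W, M) = E" "wts (E, W, M) = W" "mks (E, W, M) = M"
  by (simp_all add: edgs_def wts_def mks_def)

lemma contract_nonloop:
  assumes "end1 G i \<noteq> end2 G i"
  shows "contract G i =
    (map (\<lambda>(x, y). (merge_ends G i x, merge_ends G i y))
       (remove_nth i (edgs G)),
     map (\<lambda>j. sum_list (map (\<lambda>v. wts G ! v)
       (filter (\<lambda>v. merge_ends G i v = j) [0..<nV G]))) [0..<nV G - 1],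
     map (merge_ends G i) (mks G))"
  using assms unfolding contract_def merge_map_def end1_def end2_def Let_def by simp

lemma contract_loop:
  assumes "end1 G i = end2 G i"
  shows "contract G i = (remove_nth i (edgs G), (wts G)[end1 G i := wts G ! end1 G i + 1], mks G)"
  using assms unfolding contract_def end1_def end2_def Let_def by simp

lemma merge_map_eq_iff:
  assumes "a \<noteq> b"
  shows "merge_map a b x = merge_map a b y \<longleftrightarrow> x = y \<or> (x \<in> {a, b} \<and> y \<in> {a, b})"
  using assms unfolding merge_map_def Let_def by auto

lemma merge_map_snd: "merge_map a b b = merge_map a b a"
  unfolding merge_map_def Let_def by auto

lemma merge_map_less:
  assumes "a < n" "b < n" "a \<noteq> b" "x < n"
  shows "merge_map a b x < n - 1"
  using assms unfolding merge_map_def Let_def by auto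

lemma merge_map_surj:
  assumes "a < n" "b < n" "a \<noteq> b" "j < n - 1"
  shows "\<exists>x<n. x \<noteq> b \<and> merge_map a b x = j"
proof (cases "j < b")
  case True
  then show ?thesis using assms by (intro exI[of _ j]) (auto simp: merge_map_def Let_def)
next
  case False
  then show ?thesis using assms by (intro exI[of _ "Suc j"]) (auto simp: merge_map_def Let_def)
qed

lemma merge_map_image:
  assumes "a < n" "b < n" "a \<noteq> b"
  shows "merge_map a b ` {..<n} = {..<n-1}"
  using merge_map_less[OF assms] merge_map_surj[OF assms] by fastforce

lemma card_merge_map_fiber:
  assumes "a < n" "b < n" "a \<noteq> b" "j < n - 1"
  shows "card {v. v < n \<and> merge_map a b v = j} = (if merge_map a b a = j then 2 else 1)"
proof (cases "merge_map a b a = j")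
  case True
  have "{v. v < n \<and> merge_map a b v = j} = {a, b}"
    using True assms merge_map_eq_iff[OF assms(3)] by auto
  then show ?thesis using True assms by simp
next
  case False
  obtain x where x: "x < n" "merge_map a b x = j" using merge_map_surj[OF assms] by blast
  have "{v. v < n \<and> merge_map a b v = j} = {x}"
    using False assms x merge_map_eq_iff[OF assms(3)] by auto
  then show ?thesis using False by simp
qed

lemma length_filter_fiber:
  assumes "\<forall>x\<in>set xs. h x < (n::nat)"
  shows "length (filter (\<lambda>x. f (h x) = j) xs)
    = (\<Sum>v\<in>{v. v < n \<and> f v = j}. length (filter (\<lambda>x. h x = v) xs))"
  using assms
proof (induction xs)
  case Nil
  then show ?case by simp
next
  case (Cons x xs)
  let ?S = "{v. v < n \<and> f v = j}"
  have "finite ?S"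
    by (rule finite_subset[of _ "{..<n}"]) auto
  then have "(\<Sum>v\<in>?S. if h x = v then 1 else 0) = (if f (h x) = j then 1 else (0::nat))"
    using Cons.prems by simp
  moreover have "(\<Sum>v\<in>?S. length (filter (\<lambda>x. h x = v) (x # xs)))
      = (\<Sum>v\<in>?S. (if h x = v then 1 else 0) + length (filter (\<lambda>x. h x = v) xs))"
    by (rule sum.cong) auto
  ultimately show ?case
    using Cons by (simp add: sum.distrib)
qed

lemma length_filter_remove:
  assumes "i < length xs"
  shows "length (filter P xs) = length (filter P (remove_nth i xs)) + (if P (xs ! i) then 1 else 0)"
proof -
  have "xs = take i xs @ [xs ! i] @ drop (Suc i) xs"
    using assms by (simp add: id_take_nth_drop)
  then have "length (filter P xs) = length (filter P (take i xs @ [xs ! i] @ drop (Suc i) xs))"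
    by simp
  then show ?thesis
    by simp
qed

lemma sum_list_filter_upt:
  "sum_list (map g (filter P [0..<n])) = (\<Sum>v\<in>{v. v < n \<and> P v}. g v)"
proof -
  have "sum_list (map g (filter P [0..<n])) = sum g (set (filter P [0..<n]))"
    by (rule sum_list_distinct_conv_sum_set) simp
  also have "set (filter P [0..<n]) = {v. v < n \<and> P v}" by auto
  finally show ?thesis .
qed

definition contract_vmap :: "lgraph \<Rightarrow> nat \<Rightarrow> nat \<Rightarrow> nat" where
  "contract_vmap G i v = (if end1 G i = end2 G i then v else merge_ends G i v)"

lemma mks_contract: "mks (contract G i) = map (contract_vmap G i) (mks G)"
proof (cases "end1 G i = end2 G i")
  case True
  then have "contract_vmap G i = id" by (simp add: contract_vmap_def fun_eq_iff)
  then show ?thesis using True by (simp add: contract_loop end1_def end2_def)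
next
  case False
  then have "contract_vmap G i = merge_ends G i" by (simp add: contract_vmap_def fun_eq_iff)
  then show ?thesis using False by (simp add: contract_nonloop end1_def end2_def)
qed

definition bounded_graph :: "lgraph \<Rightarrow> bool" where
  "bounded_graph G \<longleftrightarrow> (\<forall>e\<in>set (edgs G). fst e < nV G \<and> snd e < nV G) \<and> (\<forall>u\<in>set (mks G). u < nV G)"

lemma valid_bounded: "valid g n G \<Longrightarrow> bounded_graph G"
  by (simp add: valid_def bounded_graph_def)

lemma valid_stab: "valid g n G \<Longrightarrow> v < nV G \<Longrightarrow> 2 < stab G v"
  by (simp add: valid_def stab_def)

context
  fixes G :: lgraph and i :: nat
  assumes bG: "bounded_graph G" and iG: "i < length (edgs G)"
begin

lemma end1_less: "end1 G i < nV G" and end2_less: "end2 G i < nV G"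
  using bG iG nth_mem[OF iG] unfolding bounded_graph_def end1_def end2_def by auto

lemma length_edgs_contract: "length (edgs (contract G i)) = length (edgs G) - 1"
  using iG
  by (cases "end1 G i = end2 G i") (simp_all add: contract_nonloop contract_loop min_def)

lemma nV_contract_nonloop: "end1 G i \<noteq> end2 G i \<Longrightarrow> nV (contract G i) = nV G - 1"
  by (simp add: contract_nonloop end1_def end2_def nV_def)

lemma wt_contract_nonloop: "end1 G i \<noteq> end2 G i \<Longrightarrow> j < nV G - 1 \<Longrightarrow>
    wt (contract G i) j = (\<Sum>v\<in>{v. v < nV G \<and> merge_ends G i v = j}. wt G v)"
  by (simp add: contract_nonloop end1_def end2_def wt_def sum_list_filter_upt)

lemma mark_val_contract_nonloop:
  assumes "end1 G i \<noteq> end2 G i"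
  shows "mark_val (contract G i) j = (\<Sum>v\<in>{v. v < nV G \<and> merge_ends G i v = j}. mark_val G v)"
proof -
  have "mark_val (contract G i) j = length (filter (\<lambda>u. merge_ends G i u = j) (mks G))"
    using assms by (simp add: contract_nonloop mark_val_def filter_map o_def)
  then show ?thesis
    using length_filter_fiber[of "mks G" "\<lambda>u. u" "nV G" "merge_ends G i" j] bG
    by (simp add: bounded_graph_def mark_val_def)
qed

lemma edge_val_contract_nonloop:
  assumes ne: "end1 G i \<noteq> end2 G i"
  shows "edge_val (contract G i) j + (if merge_ends G i (end1 G i) = j then 2 else 0)
    = (\<Sum>v\<in>{v. v < nV G \<and> merge_ends G i v = j}. edge_val G v)"
proof -
  let ?F = "merge_ends G i" and ?es = "remove_nth i (edgs G)"
  let ?count = "\<lambda>p es. length (filter (\<lambda>e. ?F (p e) = j) es)"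
  have "edge_val (contract G i) j = ?count fst ?es + ?count snd ?es"
    using ne by (simp add: contract_nonloop edge_val_def filter_map o_def case_prod_beta)
  moreover have "?count fst (edgs G) = ?count fst ?es + (if ?F (end1 G i) = j then 1 else 0)"
    "?count snd (edgs G) = ?count snd ?es + (if ?F (end1 G i) = j then 1 else 0)"
    using length_filter_remove[OF iG] merge_map_snd[of "end1 G i" "end2 G i"]
    by (simp_all add: end1_def end2_def)
  moreover have "?count p (edgs G)
      = (\<Sum>v\<in>{v. v < nV G \<and> ?F v = j}. length (filter (\<lambda>e. p e = v) (edgs G)))"
    if "p = fst \<or> p = snd" for p
    using that length_filter_fiber[of "edgs G" p "nV G" ?F j] bG by (auto simp: bounded_graph_def)
  ultimately show ?thesis
    by (simp add: edge_val_def sum.distrib)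
qed

lemma nV_contract_loop: "end1 G i = end2 G i \<Longrightarrow> nV (contract G i) = nV G"
  by (simp add: contract_loop nV_def)

lemma wt_contract_loop:
  "end1 G i = end2 G i \<Longrightarrow> j < nV G \<Longrightarrow> wt (contract G i) j = wt G j + (if j = end1 G i then 1 else 0)"
  using end1_less by (simp add: contract_loop wt_def nV_def nth_list_update)

lemma mark_val_contract_loop: "end1 G i = end2 G i \<Longrightarrow> mark_val (contract G i) j = mark_val G j"
  by (simp add: contract_loop mark_val_def)

lemma edge_val_contract_loop:
  assumes loop: "end1 G i = end2 G i"
  shows "edge_val (contract G i) j + (if j = end1 G i then 2 else 0) = edge_val G j"
proof -
  let ?count = "\<lambda>p es. length (filter (\<lambda>e. p e = j) es)"
  have "?count fst (edgs G) = ?count fst (remove_nth i (edgs G)) + (if end1 G i = j then 1 else 0)"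
    "?count snd (edgs G) = ?count snd (remove_nth i (edgs G)) + (if end1 G i = j then 1 else 0)"
    using length_filter_remove[OF iG] loop by (simp_all add: end1_def end2_def)
  then show ?thesis
    using loop by (auto simp: contract_loop edge_val_def)
qed

lemma stab_contract_nonloop:
  assumes "end1 G i \<noteq> end2 G i" "j < nV G - 1"
  shows "stab (contract G i) j + (if merge_ends G i (end1 G i) = j then 2 else 0)
       = (\<Sum>v\<in>{v. v < nV G \<and> merge_ends G i v = j}. stab G v)"
  using wt_contract_nonloop[OF assms] edge_val_contract_nonloop[OF assms(1), of j]
    mark_val_contract_nonloop[OF assms(1), of j]
  by (simp add: stab_def val_eq_edge_mark sum.distrib sum_distrib_left)

lemma stab_contract_loop: "end1 G i = end2 G i \<Longrightarrow> j < nV G \<Longrightarrow> stab (contract G i) j = stab G j"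
  using wt_contract_loop edge_val_contract_loop[of j] mark_val_contract_loop[of j]
  by (auto simp: stab_def val_eq_edge_mark split: if_splits)

end

lemma nth_remove_nth:
  assumes "i < length E" "r < length E - 1"
  shows "(remove_nth i E) ! r = E ! (if r < i then r else Suc r)"
  using assms by (auto simp: nth_append min_def)

lemma nth_mem_remove_nth:
  assumes "i < length E" "k < length E" "k \<noteq> i"
  shows "E ! k \<in> set (remove_nth i E)"
proof -
  let ?r = "if k < i then k else k - 1"
  have "?r < length E - 1" "(if ?r < i then ?r else Suc ?r) = k"
    using assms by auto
  then show ?thesis
    using nth_remove_nth[OF assms(1), of ?r] nth_mem[of ?r "remove_nth i E"] assms
    by (auto simp: min_def)
qed

lemma ends_contract_nonloop:
  assumes iG: "i < length (edgs G)" and ne: "end1 G i \<noteq> end2 G i" and r: "r < length (edgs G) - 1"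
  shows "ends (edgs (contract G i) ! r) = merge_ends G i ` ends (edgs G ! (if r < i then r else Suc r))"
proof -
  have "r < length (remove_nth i (edgs G))"
    using r iG by (simp add: min_def)
  then have "edgs (contract G i) ! r
      = (\<lambda>(x, y). (merge_ends G i x, merge_ends G i y)) (remove_nth i (edgs G) ! r)"
    using ne by (simp add: contract_nonloop del: map_append)
  then show ?thesis
    using nth_remove_nth[OF iG r] by (simp add: ends_def case_prod_beta)
qed

lemma merge_map_fiber:
  assumes "a < n" "b < n" "a \<noteq> b" "x < n"
  shows "{v. v < n \<and> merge_map a b v = merge_map a b x} = (if x \<in> {a, b} then {a, b} else {x})"
  using assms merge_map_eq_iff[OF assms(3)] by auto

lemma stab_contract_nonloop_image:
  assumes bG: "bounded_graph G" and iG: "i < length (edgs G)" and ne: "end1 G i \<noteq> end2 G i"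
    and x: "x < nV G"
  shows "stab (contract G i) (merge_ends G i x) + (if x \<in> {end1 G i, end2 G i} then 2 else 0)
       = (if x \<in> {end1 G i, end2 G i} then stab G (end1 G i) + stab G (end2 G i) else stab G x)"
proof -
  let ?E = "{end1 G i, end2 G i}"
  have ends: "end1 G i < nV G" "end2 G i < nV G"
    using end1_less[OF bG iG] end2_less[OF bG iG] .
  have "{v. v < nV G \<and> merge_ends G i v = merge_ends G i x} = (if x \<in> ?E then ?E else {x})"
    using merge_map_fiber[OF ends ne x] .
  moreover have "merge_ends G i (end1 G i) = merge_ends G i x \<longleftrightarrow> x \<in> ?E"
    using merge_map_eq_iff[OF ne] by auto
  ultimately show ?thesis
    using stab_contract_nonloop[OF bG iG ne merge_map_less[OF ends ne x]] ne
    by (auto split: if_splits)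
qed

lemma sym_adj: "sym (adj G)"
  by (auto simp: sym_def adj_def)

lemma rtrancl_adj_sym: "(x, y) \<in> (adj G)\<^sup>* \<Longrightarrow> (y, x) \<in> (adj G)\<^sup>*"
  by (rule symD[OF sym_rtrancl[OF sym_adj]])

lemma set_edgs_contract_nonloop:
  "end1 G i \<noteq> end2 G i \<Longrightarrow> set (edgs (contract G i))
    = (\<lambda>(x, y). (merge_ends G i x, merge_ends G i y)) ` set (remove_nth i (edgs G))"
  by (simp add: contract_nonloop image_Un)

lemma adj_contract_nonloop:
  assumes iG: "i < length (edgs G)" and ne: "end1 G i \<noteq> end2 G i" and xy: "(x, y) \<in> adj G"
  shows "merge_ends G i x = merge_ends G i y
    \<or> (merge_ends G i x, merge_ends G i y) \<in> adj (contract G i)"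
proof -
  let ?F = "merge_ends G i"
  have main: "?F u = ?F w \<or> (?F u, ?F w) \<in> set (edgs (contract G i))"
    if uw: "(u, w) \<in> set (edgs G)" for u w
  proof -
    obtain k where k: "k < length (edgs G)" "edgs G ! k = (u, w)"
      using uw by (metis in_set_conv_nth)
    show ?thesis
    proof (cases "k = i")
      case True
      then have "u = end1 G i" "w = end2 G i"
        using k by (auto simp: end1_def end2_def)
      then show ?thesis
        using merge_map_snd by metis
    next
      case False
      then have "(u, w) \<in> set (remove_nth i (edgs G))"
        using nth_mem_remove_nth[OF iG k(1) False] k by simp
      then show ?thesis
        unfolding set_edgs_contract_nonloop[OF ne] by force
    qed
  qed
  from xy have "(x, y) \<in> set (edgs G) \<or> (y, x) \<in> set (edgs G)" by (simp add: adj_def)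
  then show ?thesis
  proof
    assume "(x, y) \<in> set (edgs G)"
    then show ?thesis using main[of x y] unfolding adj_def by auto
  next
    assume "(y, x) \<in> set (edgs G)"
    then show ?thesis using main[of y x] unfolding adj_def by auto
  qed
qed

lemma rtrancl_adj_contract_nonloop:
  assumes iG: "i < length (edgs G)" and ne: "end1 G i \<noteq> end2 G i" and xy: "(x, y) \<in> (adj G)\<^sup>*"
  shows "(merge_ends G i x, merge_ends G i y) \<in> (adj (contract G i))\<^sup>*"
  using xy
proof (induction rule: rtrancl_induct)
  case base
  then show ?case by simp
next
  case (step y z)
  then show ?case
    using adj_contract_nonloop[OF iG ne step(2)] by (metis rtrancl.rtrancl_into_rtrancl)
qed

context
  fixes G :: lgraph and i :: nat
  assumes bG: "bounded_graph G" and iG: "i < length (edgs G)" and ne: "end1 G i \<noteq> end2 G i"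
begin

lemma bounded_graph_contract_nonloop: "bounded_graph (contract G i)"
proof -
  let ?F = "merge_ends G i"
  have F: "?F x < nV (contract G i)" if "x < nV G" for x
    using merge_map_less[OF end1_less[OF bG iG] end2_less[OF bG iG] ne that]
    by (simp add: nV_contract_nonloop[OF bG iG ne])
  have "fst e < nV G \<and> snd e < nV G" if "e \<in> set (remove_nth i (edgs G))" for e
    using that bG by (auto simp: bounded_graph_def dest: in_set_takeD in_set_dropD)
  moreover have "u < nV G" if "u \<in> set (mks G)" for u
    using that bG by (auto simp: bounded_graph_def)
  ultimately show ?thesis
    unfolding bounded_graph_def set_edgs_contract_nonloop[OF ne]
    using ne F by (fastforce simp: mks_contract contract_vmap_def)
qed

lemma gconnected_contract_nonloop:
  assumes "gconnected G"
  shows "gconnected (contract G i)"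
  unfolding gconnected_def
proof (intro allI impI)
  let ?F = "merge_ends G i"
  have ends: "end1 G i < nV G" "end2 G i < nV G"
    using end1_less[OF bG iG] end2_less[OF bG iG] .
  have nv: "nV (contract G i) = nV G - 1"
    using nV_contract_nonloop[OF bG iG ne] .
  fix j
  assume "j < nV (contract G i)"
  then obtain x where x: "x < nV G" "?F x = j"
    using merge_map_surj[OF ends ne, of j] nv by auto
  obtain w where w: "w < nV G" "?F w = 0"
    using merge_map_surj[OF ends ne, of 0] ends ne nv by auto
  have to_x: "(?F 0, ?F x) \<in> (adj (contract G i))\<^sup>*"
    and to_w: "(?F 0, ?F w) \<in> (adj (contract G i))\<^sup>*"
    using assms x(1) w(1) by (auto simp: gconnected_def intro: rtrancl_adj_contract_nonloop[OF iG ne])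
  have "(?F w, ?F 0) \<in> (adj (contract G i))\<^sup>*"
    using to_w by (rule rtrancl_adj_sym)
  then show "(0, j) \<in> (adj (contract G i))\<^sup>*"
    using rtrancl_trans[OF _ to_x] w(2) x(2) by simp
qed

lemma sum_list_wts_contract_nonloop: "sum_list (wts (contract G i)) = sum_list (wts G)"
proof -
  let ?F = "merge_ends G i" and ?n = "nV G"
  have "sum_list (wts (contract G i)) = (\<Sum>j<?n - 1. wt (contract G i) j)"
    using nV_contract_nonloop[OF bG iG ne]
    by (simp add: wt_def nV_def sum_list_sum_nth atLeast0LessThan)
  also have "\<dots> = (\<Sum>j\<in>?F ` {..<?n}. \<Sum>v\<in>{v\<in>{..<?n}. ?F v = j}. wt G v)"
    using merge_map_image[OF end1_less[OF bG iG] end2_less[OF bG iG] ne]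
      wt_contract_nonloop[OF bG iG ne] by (intro sum.cong) auto
  also have "\<dots> = (\<Sum>v<?n. wt G v)"
    by (rule sum.image_gen[symmetric]) simp
  also have "\<dots> = sum_list (wts G)"
    by (simp add: wt_def nV_def sum_list_sum_nth atLeast0LessThan)
  finally show ?thesis .
qed

lemma stab_contract_nonloop_gt2:
  assumes "\<forall>v<nV G. 2 < stab G v" "j < nV (contract G i)"
  shows "2 < stab (contract G i) j"
proof -
  have ends: "end1 G i < nV G" "end2 G i < nV G"
    using end1_less[OF bG iG] end2_less[OF bG iG] .
  obtain x where "x < nV G" "merge_ends G i x = j"
    using merge_map_surj[OF ends ne, of j] assms(2) nV_contract_nonloop[OF bG iG ne] by auto
  then show ?thesis
    using stab_contract_nonloop_image[OF bG iG ne, of x] assms(1)[rule_format, of "end1 G i"]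
      assms(1)[rule_format, of "end2 G i"] assms(1)[rule_format, of x] ends
    by (auto split: if_splits)
qed

end

lemma valid_contract_nonloop:
  assumes v: "valid g n G" and iG: "i < length (edgs G)" and ne: "end1 G i \<noteq> end2 G i"
  shows "valid g n (contract G i)"
proof -
  have bG: "bounded_graph G"
    using valid_bounded[OF v] .
  have "2 \<le> nV G"
    using end1_less[OF bG iG] end2_less[OF bG iG] ne by linarith
  then have "length (edgs (contract G i)) + 1 + sum_list (wts (contract G i)) = g + nV (contract G i)"
    using v iG length_edgs_contract[OF bG iG] nV_contract_nonloop[OF bG iG ne]
      sum_list_wts_contract_nonloop[OF bG iG ne] unfolding valid_def by linarith
  moreover have "\<forall>j<nV (contract G i). 2 < stab (contract G i) j"
    using stab_contract_nonloop_gt2[OF bG iG ne] valid_stab[OF v] by blast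
  ultimately show ?thesis
    using v bounded_graph_contract_nonloop[OF bG iG ne] gconnected_contract_nonloop[OF bG iG ne]
      nV_contract_nonloop[OF bG iG ne] \<open>2 \<le> nV G\<close>
    by (auto simp: valid_def bounded_graph_def stab_def mks_contract)
qed

lemma bij_betw_merge_map:
  assumes ab: "a < n" "b < n" "a \<noteq> b" and m: "m \<in> {a, b}"
  shows "bij_betw (merge_map a b) ({..<n} - {m}) {..<n - 1}"
proof (rule bij_betw_imageI)
  show "inj_on (merge_map a b) ({..<n} - {m})"
    using m merge_map_eq_iff[OF ab(3)] by (auto simp: inj_on_def)
  let ?other = "if m = a then b else a"
  have other: "?other \<in> {..<n} - {m}" "merge_map a b ?other = merge_map a b m"
    using ab m merge_map_snd[of a b] by auto
  have "{..<n} = insert m ({..<n} - {m})"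
    using ab m by auto
  moreover have "merge_map a b m \<in> merge_map a b ` ({..<n} - {m})"
    by (rule image_eqI[of _ "merge_map a b" ?other]) (use other in auto)
  ultimately have "merge_map a b ` {..<n} = merge_map a b ` ({..<n} - {m})"
    by (metis image_insert insert_absorb)
  then show "merge_map a b ` ({..<n} - {m}) = {..<n - 1}"
    using merge_map_image[OF ab] by simp
qed

lemma wt_contract_nonloop_other:
  assumes bG: "bounded_graph G" and iG: "i < length (edgs G)" and ne: "end1 G i \<noteq> end2 G i"
    and m: "m \<in> {end1 G i, end2 G i}" and w0: "wt G m = 0" and x: "x < nV G" "x \<noteq> m"
  shows "wt (contract G i) (merge_ends G i x) = wt G x"
proof -
  have ends: "end1 G i < nV G" "end2 G i < nV G"
    using end1_less[OF bG iG] end2_less[OF bG iG] .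
  have "{v. v < nV G \<and> merge_ends G i v = merge_ends G i x}
      = (if x \<in> {end1 G i, end2 G i} then {x, m} else {x})"
    using merge_map_fiber[OF ends ne x(1)] m x(2) by auto
  then show ?thesis
    using wt_contract_nonloop[OF bG iG ne merge_map_less[OF ends ne x(1)]] x(2) w0 by simp
qed

lemma ends_subset:
  assumes "bounded_graph H" "k < length (edgs H)"
  shows "ends (edgs H ! k) \<subseteq> {..<nV H}"
  using assms nth_mem[of k "edgs H"] unfolding bounded_graph_def ends_def by auto

context
  fixes G :: lgraph and i x :: nat
  assumes bG: "bounded_graph G" and iG: "i < length (edgs G)" and x: "x < nV G"
begin

lemma stab_contract_vmap_eq:
  assumes "end1 G i = end2 G i \<or> x \<notin> {end1 G i, end2 G i}"
  shows "stab (contract G i) (contract_vmap G i x) = stab G x"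
  using assms stab_contract_loop[OF bG iG _ x] stab_contract_nonloop_image[OF bG iG _ x]
  by (auto simp: contract_vmap_def)

lemma stab_contract_vmap_gt:
  assumes "end1 G i \<noteq> end2 G i" "x \<in> {end1 G i, end2 G i}" "\<forall>v<nV G. 2 < stab G v"
  shows "stab G x < stab (contract G i) (contract_vmap G i x)"
  using assms stab_contract_nonloop_image[OF bG iG assms(1) x] end1_less[OF bG iG] end2_less[OF bG iG]
  by (force simp: contract_vmap_def)

lemma stab_contract_vmap_ge:
  "\<forall>v<nV G. 2 < stab G v \<Longrightarrow> stab G x \<le> stab (contract G i) (contract_vmap G i x)"
  using stab_contract_vmap_eq stab_contract_vmap_gt by (metis order.order_iff_strict)

end

section \<open>Invariance under isomorphism\<close>

lemma length_filter_sum: "length (filter P xs) = (\<Sum>k<length xs. if P (xs ! k) then 1 else 0)"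
proof -
  have "length (filter P xs) = card {k\<in>{..<length xs}. P (xs ! k)}"
    by (simp add: length_filter_conv_card lessThan_def)
  also have "\<dots> = (\<Sum>k<length xs. if P (xs ! k) then 1 else 0)"
    by (simp add: sum.If_cases Int_def)
  finally show ?thesis .
qed

definition incid :: "nat \<times> nat \<Rightarrow> nat \<Rightarrow> nat" where
  "incid e w = (if fst e = w then 1 else 0) + (if snd e = w then 1 else 0)"

lemma edge_val_eq_sum_incid: "edge_val G w = (\<Sum>k<length (edgs G). incid (edgs G ! k) w)"
  by (simp add: edge_val_def length_filter_sum incid_def sum.distrib)

lemma mark_val_eq_sum: "mark_val G w = (\<Sum>k<length (mks G). if mks G ! k = w then 1 else 0)"
  by (simp add: mark_val_def length_filter_sum)

text \<open>\<open>3 - card (ends e)\<close> is \<open>2\<close> for a loop and \<open>1\<close> otherwise.\<close>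
lemma incid_eq: "incid e w = (if w \<in> ends e then 3 - card (ends e) else 0)"
  by (cases e) (auto simp: incid_def ends_def)

lemma incid_eq_1: "incid e m = 1 \<Longrightarrow> fst e \<noteq> snd e \<and> m \<in> {fst e, snd e}"
  unfolding incid_def by (cases "fst e = m"; cases "snd e = m") simp_all

lemma incid_eq_0: "incid e m = 0 \<Longrightarrow> m \<notin> ends e"
  unfolding incid_def ends_def by (cases "fst e = m"; cases "snd e = m") simp_all

lemma incid_image:
  assumes "inj_on p N" "ends e \<subseteq> N" "v \<in> N" "ends e' = p ` ends e"
  shows "incid e' (p v) = incid e v"
proof -
  have "p v \<in> p ` ends e \<longleftrightarrow> v \<in> ends e" using assms by (meson inj_on_image_mem_iff)
  moreover have "card (p ` ends e) = card (ends e)" using assms by (meson card_image inj_on_subset)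
  ultimately show ?thesis using assms(4) by (simp add: incid_eq)
qed

lemma edge_val_iso:
  assumes iso: "iso G G' p s" and bG: "bounded_graph G" and v: "v < nV G"
  shows "edge_val G' (p v) = edge_val G v"
proof -
  let ?m = "length (edgs G)"
  have inj: "inj_on p {..<nV G}" and sp: "s permutes {..<?m}" and len: "length (edgs G') = ?m"
    and ends: "\<And>k. k < ?m \<Longrightarrow> ends (edgs G' ! s k) = p ` ends (edgs G ! k)"
    using iso unfolding iso_def by (auto intro: bij_betw_imp_inj_on)
  have "edge_val G' (p v) = (\<Sum>k<?m. incid (edgs G' ! k) (p v))"
    by (simp add: edge_val_eq_sum_incid len)
  also have "\<dots> = (\<Sum>k<?m. incid (edgs G' ! s k) (p v))"
    using sum.reindex_bij_betw[OF permutes_imp_bij[OF sp], of "\<lambda>k. incid (edgs G' ! k) (p v)"] by simp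
  also have "\<dots> = (\<Sum>k<?m. incid (edgs G ! k) v)"
  proof (rule sum.cong[OF refl])
    fix k
    assume k: "k \<in> {..<?m}"
    have "ends (edgs G ! k) \<subseteq> {..<nV G}"
      using bG nth_mem[of k "edgs G"] k unfolding bounded_graph_def ends_def by auto
    then show "incid (edgs G' ! s k) (p v) = incid (edgs G ! k) v"
      using incid_image[OF inj _ _ ends] k v by auto
  qed
  also have "\<dots> = edge_val G v"
    by (simp add: edge_val_eq_sum_incid)
  finally show ?thesis .
qed

lemma mark_val_iso:
  assumes iso: "iso G G' p s" and bG: "bounded_graph G" and v: "v < nV G"
  shows "mark_val G' (p v) = mark_val G v"
proof -
  have inj: "inj_on p {..<nV G}" and mk: "\<And>k. k < length (mks G) \<Longrightarrow> mks G' ! k = p (mks G ! k)"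
    and lm: "length (mks G') = length (mks G)"
    using iso unfolding iso_def by (auto intro: bij_betw_imp_inj_on)
  have "mark_val G' (p v) = (\<Sum>k<length (mks G). if p (mks G ! k) = p v then 1 else 0)"
    by (simp add: mark_val_eq_sum lm mk)
  also have "\<dots> = (\<Sum>k<length (mks G). if mks G ! k = v then 1 else 0)"
  proof (rule sum.cong[OF refl])
    fix k
    assume "k \<in> {..<length (mks G)}"
    then have "mks G ! k < nV G"
      using bG nth_mem[of k "mks G"] unfolding bounded_graph_def by auto
    then show "(if p (mks G ! k) = p v then 1 else 0) = (if mks G ! k = v then 1 else (0::nat))"
      using inj v by (auto dest: inj_onD)
  qed
  also have "\<dots> = mark_val G v"
    by (simp add: mark_val_eq_sum)
  finally show ?thesis .
qed

lemma val_iso: "iso G G' p s \<Longrightarrow> bounded_graph G \<Longrightarrow> v < nV G \<Longrightarrow> val G' (p v) = val G v"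
  by (simp add: val_eq_edge_mark edge_val_iso mark_val_iso)

lemma chi_iso:
  assumes "iso G G' p s" "bounded_graph G" "v < nV G"
  shows "chi G' (p v) = chi G v"
  using val_iso[OF assms] assms(1,3) by (simp add: chi_def iso_def)

section \<open>The chain map \<open>t\<close>\<close>

lemma chi_eq_stab: "chi G v = int (stab G v) - 2"
  by (simp add: chi_def stab_def)

lemma chi_contract_nonloop:
  assumes bG: "bounded_graph G" and iG: "i < length (edgs G)" and ne: "end1 G i \<noteq> end2 G i"
    and j: "j < nV G - 1"
  shows "chi (contract G i) j = (\<Sum>v\<in>{v. v < nV G \<and> merge_ends G i v = j}. chi G v)"
proof -
  let ?S = "{v. v < nV G \<and> merge_ends G i v = j}"
  let ?merged = "merge_ends G i (end1 G i) = j"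
  have "(\<Sum>v\<in>?S. chi G v) = int (\<Sum>v\<in>?S. stab G v) - 2 * int (card ?S)"
    by (simp add: chi_eq_stab sum_subtractf)
  also have "\<dots>
      = int (stab (contract G i) j) + (if ?merged then 2 else 0) - 2 * (if ?merged then 2 else 1)"
    using stab_contract_nonloop[OF bG iG ne j, symmetric]
      card_merge_map_fiber[OF end1_less[OF bG iG] end2_less[OF bG iG] ne j] by simp
  finally show ?thesis
    by (simp add: chi_eq_stab)
qed

lemma chi_contract_loop:
  "bounded_graph G \<Longrightarrow> i < length (edgs G) \<Longrightarrow> end1 G i = end2 G i \<Longrightarrow> j < nV G \<Longrightarrow>
    chi (contract G i) j = chi G j"
  by (simp add: chi_eq_stab stab_contract_loop)

lemma markv_simps [simp]:
  "edgs (markv G v) = edgs G" "wts (markv G v) = wts G" "nV (markv G v) = nV G"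
  "wt (markv G v) = wt G" "edge_val (markv G v) = edge_val G" "adj (markv G v) = adj G"
  by (simp_all add: markv_def nV_def wt_def edge_val_def adj_def fun_eq_iff)

lemma mark_val_markv: "mark_val (markv G v) u = (if u = v then 1 else 0)"
  by (simp add: mark_val_def markv_def)

lemma mark_val_valid0: "valid g 0 G \<Longrightarrow> mark_val G u = 0"
  by (simp add: valid_def mark_val_def)

lemma contract_markv: "contract (markv G v) i = markv (contract G i) (contract_vmap G i v)"
proof (cases "fst (edgs G ! i) = snd (edgs G ! i)")
  case True
  then show ?thesis
    using contract_loop[of "markv G v" i] contract_loop[of G i]
    by (simp add: contract_vmap_def end1_def end2_def markv_def nV_def)
next
  case False
  then show ?thesis
    using contract_nonloop[of "markv G v" i] contract_nonloop[of G i]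
    by (simp add: contract_vmap_def end1_def end2_def markv_def nV_def)
qed

lemma sum_by_fibers:
  fixes c :: "'x \<Rightarrow> 'a::comm_semiring_0"
  assumes "finite V"
  shows "(\<Sum>v\<in>V. c v * g (F v)) = (\<Sum>j\<in>F ` V. (\<Sum>v\<in>{v\<in>V. F v = j}. c v) * g j)"
proof -
  have "(\<Sum>v\<in>V. c v * g (F v)) = (\<Sum>j\<in>F ` V. \<Sum>v\<in>{v\<in>V. F v = j}. c v * g (F v))"
    by (rule sum.image_gen[OF assms])
  also have "\<dots> = (\<Sum>j\<in>F ` V. (\<Sum>v\<in>{v\<in>V. F v = j}. c v) * g j)"
  proof (rule sum.cong[OF refl])
    fix j
    have "(\<Sum>v\<in>{v\<in>V. F v = j}. c v * g (F v)) = (\<Sum>v\<in>{v\<in>V. F v = j}. c v * g j)"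
      by (rule sum.cong) auto
    then show "(\<Sum>v\<in>{v\<in>V. F v = j}. c v * g (F v)) = (\<Sum>v\<in>{v\<in>V. F v = j}. c v) * g j"
      by (simp add: sum_distrib_right)
  qed
  finally show ?thesis .
qed

text \<open>\<open>\<chi>\<close> is additive under merging the two ends of an edge, so pushing the coefficients
  \<open>\<chi>(v)\<close> forward along a contraction yields the coefficients of the contracted graph.\<close>
lemma tgen_contract:
  assumes bG: "bounded_graph G" and iG: "i < length (edgs G)"
  shows "tgen (contract G i)
    = (\<lambda>y. \<Sum>v<nV G. of_int (chi G v) * delta (markv (contract G i) (contract_vmap G i v)) y)"
proof (cases "end1 G i = end2 G i")
  case True
  then show ?thesis
    by (simp add: tgen_def contract_vmap_def nV_contract_loop[OF bG iG] chi_contract_loop[OF bG iG])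
next
  case ne: False
  let ?F = "merge_ends G i" and ?K = "contract G i"
  have "(\<Sum>v<nV G. of_int (chi G v) * delta (markv ?K (?F v)) y)
      = (\<Sum>j\<in>?F ` {..<nV G}. (\<Sum>v\<in>{v\<in>{..<nV G}. ?F v = j}. of_int (chi G v)) * delta (markv ?K j) y)"
    for y by (rule sum_by_fibers) simp
  also have "\<dots> y = (\<Sum>j<nV G - 1. of_int (chi ?K j) * delta (markv ?K j) y)" for y
    using merge_map_image[OF end1_less[OF bG iG] end2_less[OF bG iG] ne]
      chi_contract_nonloop[OF bG iG ne]
        by (intro sum.cong) (simp_all add: Collect_conj_eq lessThan_def)
  finally show ?thesis
    using ne by (simp add: tgen_def nV_contract_nonloop[OF bG iG ne] contract_vmap_def)
qed

lemma finsupp_dgen: "finsupp (dgen G)"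
  unfolding dgen_def by (rule finsupp_sum) (auto simp: finsupp_delta)

lemma finsupp_tgen: "finsupp (tgen G)"
  unfolding tgen_def by (rule finsupp_sum) (auto simp: finsupp_delta)

lemma lin_dgen: "lin F (dgen G) = (\<lambda>y. \<Sum>i<length (edgs G). (-1)^i * F (contract G i) y)"
  unfolding dgen_def by (rule lin_sum_delta) simp

lemma lin_tgen: "lin F (tgen G) = (\<lambda>y. \<Sum>v<nV G. of_int (chi G v) * F (markv G v) y)"
  unfolding tgen_def by (rule lin_sum_delta) simp

lemma lin_tgen_dgen_commute:
  assumes bG: "bounded_graph G"
  shows "lin tgen (dgen G) = lin dgen (tgen G)"
proof
  fix y
  let ?term = "\<lambda>i v. delta (markv (contract G i) (contract_vmap G i v)) y"
  have "lin dgen (tgen G) y = (\<Sum>v<nV G. of_int (chi G v) * (\<Sum>i<length (edgs G). (-1)^i * ?term i v))"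
    by (simp add: lin_tgen dgen_def contract_markv)
  also have "\<dots> = (\<Sum>i<length (edgs G). (-1)^i * (\<Sum>v<nV G. of_int (chi G v) * ?term i v))"
    by (simp add: sum_distrib_left sum.swap[of _ "{..<nV G}"] algebra_simps)
  also have "\<dots> = (\<Sum>i<length (edgs G). (-1)^i * tgen (contract G i) y)"
    by (simp add: tgen_contract[OF bG])
  finally show "lin tgen (dgen G) y = lin dgen (tgen G) y"
    by (simp add: lin_dgen)
qed

lemma valid_markv:
  assumes "valid g 0 G" "v < nV G"
  shows "valid g 1 (markv G v)"
proof -
  have "val (markv G v) u \<ge> val G u" for u
    using mark_val_valid0[OF assms(1)] by (simp add: val_eq_edge_mark mark_val_markv)
  then show ?thesis
    using assms unfolding valid_def gconnected_def
    by (auto simp: markv_def nV_def wt_def adj_def intro: less_le_trans)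
qed

lemma tgen_chains:
  assumes "valid g 0 G" "length (edgs G) = e"
  shows "tgen G \<in> chains g 1 e"
  unfolding tgen_def chains_def
proof (rule qspan_sum)
  fix v
  assume "v \<in> {..<nV G}"
  then show "delta (markv G v) \<in> qspan {delta G | G. valid g 1 G \<and> length (edgs G) = e}"
    using delta_in_chains[OF valid_markv] assms unfolding chains_def by simp
qed simp

lemma tgen_posw:
  assumes "valid g 0 G" "length (edgs G) = e" "u < nV G" "0 < wt G u"
  shows "tgen G \<in> posw g 1 e"
  unfolding tgen_def posw_def
proof (rule qspan_sum)
  fix v
  assume "v \<in> {..<nV G}"
  then show "delta (markv G v)
      \<in> qspan {delta G | G. valid g 1 G \<and> length (edgs G) = e \<and> (\<exists>v<nV G. wt G v > 0)}"
    using delta_in_posw[OF valid_markv] assms unfolding posw_def by simp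
qed simp

lemma iso_markv: "iso G G' p s \<Longrightarrow> v < nV G \<Longrightarrow> iso (markv G v) (markv G' (p v)) p s"
  by (simp add: iso_def markv_def nV_def wt_def)

lemma tgen_iso:
  assumes "iso G G' p s" "bounded_graph G"
  shows "tgen G' = (\<lambda>y. \<Sum>v<nV G. of_int (chi G v) * delta (markv G' (p v)) y)"
proof
  fix y
  have p: "bij_betw p {..<nV G} {..<nV G}" and n: "nV G' = nV G"
    using assms(1) unfolding iso_def by auto
  have "tgen G' y = (\<Sum>v<nV G. of_int (chi G' (p v)) * delta (markv G' (p v)) y)"
    using sum.reindex_bij_betw[OF p, of "\<lambda>u. of_int (chi G' u) * delta (markv G' u) y"]
    by (simp add: tgen_def n)
  then show "tgen G' y = (\<Sum>v<nV G. of_int (chi G v) * delta (markv G' (p v)) y)"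
    using assms by (simp add: chi_iso)
qed

lemma tgen_rels:
  assumes val: "valid g 0 G" and len: "length (edgs G) = e" and iso: "iso G G' p s"
  shows "(\<lambda>y. tgen G y - of_int (sign s) * tgen G' y) \<in> rels g 1 e"
proof -
  have "(\<lambda>y. tgen G y - of_int (sign s) * tgen G' y) = (\<lambda>y. \<Sum>v<nV G. of_int (chi G v) *
      (delta (markv G v) y - of_int (sign s) * delta (markv G' (p v)) y))"
    unfolding tgen_iso[OF iso valid_bounded[OF val]]
    by (simp add: tgen_def algebra_simps sum_subtractf sum_distrib_left)
  also have "\<dots> \<in> rels g 1 e"
    unfolding rels_def
  proof (rule qspan_sum)
    fix v
    assume "v \<in> {..<nV G}"
    then show "(\<lambda>y. delta (markv G v) y - of_int (sign s) * delta (markv G' (p v)) y)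
      \<in> qspan {\<lambda>y. delta G y - of_int (sign s) * delta G' y | G G' p s.
          valid g 1 G \<and> length (edgs G) = e \<and> iso G G' p s}"
      using iso_rel_in_rels[OF valid_markv _ iso_markv] assms unfolding rels_def by simp
  qed simp
  finally show ?thesis .
qed

lemma lin_tgen_chains: "lin tgen ` chains g 0 e \<subseteq> chains g 1 e"
  using lin_chains_qspan[of _ g 0 e tgen] tgen_chains[of g _ e] unfolding chains_def[of g 1 e]
  by blast

lemma lin_tgen_rels: "lin tgen ` rels g 0 e \<subseteq> rels g 1 e"
  using lin_rels_qspan[of _ g 0 e tgen] tgen_rels[of g _ e] unfolding rels_def[of g 1 e] by blast

lemma lin_tgen_posw: "lin tgen ` posw g 0 e \<subseteq> posw g 1 e"
  using lin_posw_qspan[of _ g 0 e tgen] tgen_posw[of g _ e] unfolding posw_def[of g 1 e] by blast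

lemma lin_tgen_lin_dgen:
  assumes "c \<in> chains g 0 (Suc e)"
  shows "lin tgen (lin dgen c) = lin dgen (lin tgen c)"
proof -
  have "lin tgen (lin dgen c) = lin (\<lambda>x. lin tgen (dgen x)) c"
    using assms by (simp add: lin_lin finsupp_chains finsupp_dgen)
  also have "\<dots> = lin (\<lambda>x. lin dgen (tgen x)) c"
    using supp_chains[OF assms] by (intro lin_cong) (auto intro: lin_tgen_dgen_commute valid_bounded)
  also have "\<dots> = lin dgen (lin tgen c)"
    using assms by (simp add: lin_lin finsupp_chains finsupp_tgen)
  finally show ?thesis .
qed

section \<open>The retraction \<open>s\<close>\<close>

definition unmark :: "lgraph \<Rightarrow> lgraph" where "unmark H = (edgs H, wts H, [])"

text \<open>Forgetting the marking lowers \<open>stab\<close> at the marked vertex by one, so \<open>sgen H\<close> is the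
  unmarked graph exactly when that graph is stable, and \<open>0\<close> otherwise.\<close>
definition sgen :: "lgraph \<Rightarrow> lgraph \<Rightarrow> rat" where
  "sgen H = (if 3 < stab H (hd (mks H)) then delta (unmark H) else (\<lambda>_. 0))"

lemma finsupp_sgen: "finsupp (sgen H)"
  by (simp add: sgen_def finsupp_delta finsupp_zero)

lemma unmark_simps [simp]:
  "edgs (unmark H) = edgs H" "wts (unmark H) = wts H" "mks (unmark H) = []"
  "nV (unmark H) = nV H" "wt (unmark H) = wt H" "edge_val (unmark H) = edge_val H"
  by (simp_all add: unmark_def nV_def wt_def edge_val_def fun_eq_iff)

lemma contract_unmark: "contract (unmark H) i = unmark (contract H i)"
  unfolding contract_def unmark_def by (simp add: Let_def nV_def)

lemma val_unmark: "val (unmark H) v = edge_val H v"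
  by (simp add: val_eq_edge_mark mark_val_def)

lemma mks_valid1: "valid g 1 H \<Longrightarrow> \<exists>m. mks H = [m]"
  by (simp add: valid_def length_Suc_conv)

lemma mark_less_valid1: "valid g 1 H \<Longrightarrow> hd (mks H) < nV H"
  using mks_valid1[of g H] unfolding valid_def by auto

lemma mark_val_valid1: "valid g 1 H \<Longrightarrow> mark_val H v = (if v = hd (mks H) then 1 else 0)"
  using mks_valid1[of g H] by (auto simp: mark_val_def)

lemma mark_iso_valid1:
  assumes "valid g 1 H" "iso H H' p s"
  shows "hd (mks H') = p (hd (mks H))"
proof -
  obtain m where m: "mks H = [m]"
    using mks_valid1[OF assms(1)] by blast
  then have "length (mks H') = 1" "mks H' ! 0 = p m"
    using assms(2) unfolding iso_def by auto
  then show ?thesis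
    using m by (cases "mks H'") auto
qed

lemma valid_unmark:
  assumes v: "valid g 1 H" and st: "3 < stab H (hd (mks H))"
  shows "valid g 0 (unmark H)"
proof -
  have "2 < 2 * wt H u + edge_val H u" if "u < nV H" for u
    using st valid_stab[OF v that] mark_val_valid1[OF v, of u]
    by (cases "u = hd (mks H)") (simp_all add: stab_def val_eq_edge_mark)
  then show ?thesis
    using v unfolding valid_def gconnected_def by (simp add: val_unmark adj_def)
qed

lemma sgen_chains:
  assumes "valid g 1 H" "length (edgs H) = e"
  shows "sgen H \<in> chains g 0 e"
proof (cases "3 < stab H (hd (mks H))")
  case True
  then show ?thesis
    using delta_in_chains[OF valid_unmark] assms by (simp add: sgen_def)
qed (simp add: sgen_def chains_def qspan_zero)

lemma sgen_posw:
  assumes "valid g 1 H" "length (edgs H) = e" "v < nV H" "0 < wt H v"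
  shows "sgen H \<in> posw g 0 e"
proof (cases "3 < stab H (hd (mks H))")
  case True
  then show ?thesis
    using delta_in_posw[OF valid_unmark] assms by (simp add: sgen_def)
qed (simp add: sgen_def posw_def qspan_zero)

lemma sgen_rels:
  assumes v: "valid g 1 H" and len: "length (edgs H) = e" and iso: "iso H H' p s"
  shows "(\<lambda>y. sgen H y - of_int (sign s) * sgen H' y) \<in> rels g 0 e"
proof -
  let ?m = "hd (mks H)"
  have "stab H' (hd (mks H')) = stab H ?m"
    using iso mark_less_valid1[OF v] val_iso[OF iso valid_bounded[OF v]]
    by (simp add: mark_iso_valid1[OF v iso] stab_def iso_def)
  moreover have "iso (unmark H) (unmark H') p s"
    using iso by (simp add: iso_def)
  ultimately show ?thesis
    using iso_rel_in_rels[OF valid_unmark[OF v]] len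
    by (auto simp: sgen_def rels_def[of g 0] qspan_zero)
qed

lemma sum_edge_val:
  assumes "bounded_graph G"
  shows "(\<Sum>v<nV G. edge_val G v) = 2 * length (edgs G)"
proof -
  have "(\<Sum>v<nV G. length (filter (\<lambda>e. fst e = v) (edgs G))) = length (edgs G)"
    "(\<Sum>v<nV G. length (filter (\<lambda>e. snd e = v) (edgs G))) = length (edgs G)"
    using length_filter_fiber[of "edgs G" fst "nV G" "\<lambda>_. 0::nat" 0]
      length_filter_fiber[of "edgs G" snd "nV G" "\<lambda>_. 0::nat" 0] assms
    by (simp_all add: bounded_graph_def lessThan_def)
  then show ?thesis
    by (simp add: edge_val_def sum.distrib)
qed

lemma sum_chi:
  assumes v: "valid g 0 G"
  shows "(\<Sum>v<nV G. chi G v) = 2 * int g - 2"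
proof -
  have "(\<Sum>v<nV G. chi G v) = (\<Sum>v<nV G. 2 * int (wt G v) + int (edge_val G v) - 2)"
    by (rule sum.cong) (auto simp: chi_def val_eq_edge_mark mark_val_valid0[OF v])
  also have "\<dots> = 2 * int (\<Sum>v<nV G. wt G v) + int (\<Sum>v<nV G. edge_val G v) - 2 * int (nV G)"
    by (simp add: sum.distrib sum_subtractf sum_distrib_left)
  also have "(\<Sum>v<nV G. wt G v) = sum_list (wts G)"
    by (simp add: wt_def nV_def sum_list_sum_nth atLeast0LessThan)
  also have "(\<Sum>v<nV G. edge_val G v) = 2 * length (edgs G)"
    using sum_edge_val[OF valid_bounded[OF v]] .
  finally show ?thesis
    using v unfolding valid_def by linarith
qed

lemma sgen_markv:
  assumes v: "valid g 0 G" and u: "u < nV G"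
  shows "sgen (markv G u) = delta G"
proof -
  have "stab (markv G u) u = stab G u + 1"
    using mark_val_valid0[OF v] by (simp add: stab_def val_eq_edge_mark mark_val_markv)
  moreover have "unmark (markv G u) = G"
    using v by (cases G) (simp add: unmark_def markv_def valid_def)
  ultimately show ?thesis
    using valid_stab[OF v u] by (simp add: sgen_def markv_def)
qed

lemma lin_sgen_tgen:
  assumes v: "valid g 0 G"
  shows "lin sgen (tgen G) = (\<lambda>y. (2 * of_nat g - 2) * delta G y)"
proof -
  have "lin sgen (tgen G) = (\<lambda>y. (\<Sum>v<nV G. of_int (chi G v)) * delta G y)"
    by (simp add: lin_tgen sgen_markv[OF v] sum_distrib_right)
  also have "(\<Sum>v<nV G. (of_int (chi G v)::rat)) = 2 * of_nat g - 2"
    using arg_cong[OF sum_chi[OF v], of "of_int :: int \<Rightarrow> rat"] by simp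
  finally show ?thesis .
qed

section \<open>Unstable marked vertices\<close>

definition shift_cycle :: "nat \<Rightarrow> nat \<Rightarrow> nat \<Rightarrow> nat" where
  "shift_cycle i j k = (if i \<le> k \<and> k < j then Suc k else if k = j then i else k)"

lemma shift_cycle_Suc:
  "shift_cycle i (i + Suc d) = shift_cycle i (i + d) \<circ> Transposition.transpose (i + d) (Suc (i + d))"
  by (auto simp: fun_eq_iff shift_cycle_def Transposition.transpose_def)

lemma permutation_sign_shift_cycle:
  "permutation (shift_cycle i (i + d)) \<and> sign (shift_cycle i (i + d)) = (-1) ^ d"
proof (induction d)
  case 0
  have "shift_cycle i i = id"
    by (auto simp: fun_eq_iff shift_cycle_def)
  then show ?case by simp
next
  case (Suc d)
  let ?T = "Transposition.transpose (i + d) (Suc (i + d))"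
  have T: "permutation ?T" "sign ?T = -1"
    by (simp_all add: permutation_swap_id sign_swap_id)
  then have "sign (shift_cycle i (i + d) \<circ> ?T) = sign (shift_cycle i (i + d)) * sign ?T"
    using Suc by (blast intro: sign_compose)
  then have "permutation (shift_cycle i (i + d) \<circ> ?T)
      \<and> sign (shift_cycle i (i + d) \<circ> ?T) = (-1) ^ Suc d"
    using Suc T by (simp add: permutation_compose)
  then show ?case
    unfolding shift_cycle_Suc .
qed

lemma sign_shift_cycle: "i \<le> j \<Longrightarrow> sign (shift_cycle i j) = (-1) ^ (j - i)"
  using permutation_sign_shift_cycle[of i "j - i"] by simp

lemma minus_one_power_shift_cycle:
  assumes "i < j"
  shows "(-1::rat) ^ j = - ((-1) ^ i * of_int (sign (shift_cycle i (j - 1))))"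
proof -
  have "j = Suc (i + (j - 1 - i))"
    using assms by simp
  then have "(-1::rat) ^ j = - ((-1) ^ i * (-1) ^ (j - 1 - i))"
    by (metis power_Suc power_add mult_minus1)
  then show ?thesis
    using sign_shift_cycle[of i "j - 1"] assms by simp
qed

lemma shift_cycle_permutes:
  assumes "i \<le> j" "j < e"
  shows "shift_cycle i j permutes {..<e}"
proof -
  have "bij (shift_cycle i j)"
    using permutation_sign_shift_cycle[of i "j - i"] assms by (simp add: permutation_bijective)
  moreover have "shift_cycle i j x = x" if "x \<notin> {..<e}" for x
    using that assms by (auto simp: shift_cycle_def)
  ultimately show ?thesis
    unfolding permutes_def by (metis bij_pointE)
qed

locale bivalent_vertex =
  fixes H :: lgraph and m i1 i2 :: nat
  assumes bounded: "bounded_graph H" and i1_less_i2: "i1 < i2" and i2_less: "i2 < length (edgs H)"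
    and nonloop1: "end1 H i1 \<noteq> end2 H i1" and nonloop2: "end1 H i2 \<noteq> end2 H i2"
    and at1: "m \<in> {end1 H i1, end2 H i1}" and at2: "m \<in> {end1 H i2, end2 H i2}"
    and not_at: "\<And>k. k < length (edgs H) \<Longrightarrow> k \<noteq> i1 \<Longrightarrow> k \<noteq> i2 \<Longrightarrow> m \<notin> ends (edgs H ! k)"
    and weight0: "wt H m = 0" and m_less: "m < nV H"
begin

abbreviation "F1 \<equiv> merge_ends H i1"
abbreviation "F2 \<equiv> merge_ends H i2"
abbreviation "V \<equiv> {..<nV H} - {m}"

text \<open>Both contractions merge \<open>m\<close> into its other neighbour, so on the remaining vertices they
  differ only by the relabelling \<open>vmap\<close>.\<close>
definition vmap :: "nat \<Rightarrow> nat" where "vmap = F2 \<circ> inv_into V F1"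

definition other1 :: nat where "other1 = (if m = end1 H i1 then end2 H i1 else end1 H i1)"
definition other2 :: nat where "other2 = (if m = end1 H i2 then end2 H i2 else end1 H i2)"

lemma i1_less: "i1 < length (edgs H)"
  using i1_less_i2 i2_less by simp

lemma ends1_less: "end1 H i1 < nV H" "end2 H i1 < nV H"
  using end1_less[OF bounded i1_less] end2_less[OF bounded i1_less] .

lemma ends2_less: "end1 H i2 < nV H" "end2 H i2 < nV H"
  using end1_less[OF bounded i2_less] end2_less[OF bounded i2_less] .

lemma bij_F1: "bij_betw F1 V {..<nV H - 1}"
  using bij_betw_merge_map[OF ends1_less nonloop1 at1] .

lemma bij_F2: "bij_betw F2 V {..<nV H - 1}"
  using bij_betw_merge_map[OF ends2_less nonloop2 at2] .

lemma bij_vmap: "bij_betw vmap {..<nV H - 1} {..<nV H - 1}"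
  unfolding vmap_def using bij_betw_trans[OF bij_betw_inv_into[OF bij_F1] bij_F2] .

lemma vmap_F1: "x \<in> V \<Longrightarrow> vmap (F1 x) = F2 x"
  using bij_F1 by (simp add: vmap_def bij_betw_imp_inj_on)

lemma vmap_image: "A \<subseteq> V \<Longrightarrow> vmap ` F1 ` A = F2 ` A"
  unfolding image_image by (rule image_cong) (auto intro: vmap_F1)

lemma other1: "other1 \<in> V" "ends (edgs H ! i1) = {m, other1}" "F1 m = F1 other1"
  using ends1_less nonloop1 at1 merge_map_snd[of "end1 H i1" "end2 H i1"]
  by (auto simp: other1_def ends_def end1_def end2_def)

lemma other2: "other2 \<in> V" "ends (edgs H ! i2) = {m, other2}" "F2 m = F2 other2"
  using ends2_less nonloop2 at2 merge_map_snd[of "end1 H i2" "end2 H i2"]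
  by (auto simp: other2_def ends_def end1_def end2_def)

lemma wt_vmap: "v < nV H - 1 \<Longrightarrow> wt (contract H i2) (vmap v) = wt (contract H i1) v"
proof -
  assume "v < nV H - 1"
  then obtain x where x: "x \<in> V" "v = F1 x"
    using bij_F1 by (metis bij_betw_imp_surj_on imageE lessThan_iff)
  then show ?thesis
    using wt_contract_nonloop_other[OF bounded i1_less nonloop1 at1 weight0]
      wt_contract_nonloop_other[OF bounded i2_less nonloop2 at2 weight0] vmap_F1
    by auto
qed

text \<open>The edge labelled \<open>i2 - 1\<close> in \<open>contract H i1\<close> is the edge \<open>i2\<close> of \<open>H\<close>, which becomes
  label \<open>i1\<close> in \<open>contract H i2\<close>; the labels in between shift up by one.\<close>
lemma ends_shift_cycle:
  assumes r: "r < length (edgs H) - 1"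
  shows "ends (edgs (contract H i2) ! shift_cycle i1 (i2 - 1) r)
    = vmap ` ends (edgs (contract H i1) ! r)"
proof -
  let ?s = "shift_cycle i1 (i2 - 1) r"
  have s: "?s < length (edgs H) - 1"
    using permutes_in_image[OF shift_cycle_permutes[of i1 "i2 - 1" "length (edgs H) - 1"], of r]
      r i1_less_i2 i2_less by simp
  have e1: "ends (edgs (contract H i1) ! r) = F1 ` ends (edgs H ! (if r < i1 then r else Suc r))"
    using ends_contract_nonloop[OF i1_less nonloop1 r] .
  have e2: "ends (edgs (contract H i2) ! ?s) = F2 ` ends (edgs H ! (if ?s < i2 then ?s else Suc ?s))"
    using ends_contract_nonloop[OF i2_less nonloop2 s] .
  show ?thesis
  proof (cases "r = i2 - 1")
    case True
    then have "(if r < i1 then r else Suc r) = i2" "?s = i1"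
      using i1_less_i2 by (auto simp: shift_cycle_def)
    then have "ends (edgs (contract H i1) ! r) = F1 ` {m, other2}"
      "ends (edgs (contract H i2) ! ?s) = F2 ` {m, other1}"
      using e1 e2 other1 other2 i1_less_i2 by auto
    then show ?thesis
      using other1 vmap_F1[OF other1(1)] vmap_F1[OF other2(1)] other2(3) by auto
  next
    case False
    define j where "j = (if r < i1 then r else Suc r)"
    have "(if ?s < i2 then ?s else Suc ?s) = j"
      using False i1_less_i2 by (auto simp: shift_cycle_def j_def)
    moreover have "j < length (edgs H)" "j \<noteq> i1" "j \<noteq> i2"
      using r False i1_less_i2 by (auto simp: j_def)
    then have "ends (edgs H ! j) \<subseteq> V"
      using ends_subset[OF bounded] not_at by auto
    ultimately show ?thesis
      using e1 e2 vmap_image unfolding j_def by simp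
  qed
qed

lemma iso_contract:
  "iso (unmark (contract H i1)) (unmark (contract H i2)) vmap (shift_cycle i1 (i2 - 1))"
  unfolding iso_def
  using nV_contract_nonloop[OF bounded i1_less nonloop1]
    nV_contract_nonloop[OF bounded i2_less nonloop2]
    length_edgs_contract[OF bounded i1_less] length_edgs_contract[OF bounded i2_less]
    shift_cycle_permutes[of i1 "i2 - 1" "length (edgs H) - 1"] i1_less_i2 i2_less
    wt_vmap ends_shift_cycle bij_vmap
  by simp

end

lemma single_vertex_if_only_loops_at:
  assumes conn: "gconnected H" and m: "m < nV H"
    and loops: "\<And>e. e \<in> set (edgs H) \<Longrightarrow> m \<in> ends e \<Longrightarrow> fst e = snd e"
  shows "nV H = 1"
proof -
  have step: "z = m" if "(m, z) \<in> adj H" for z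
    using that loops unfolding adj_def ends_def by force
  have path: "(x, y) \<in> (adj H)\<^sup>* \<Longrightarrow> x = m \<Longrightarrow> y = m" for x y
    by (induction rule: rtrancl_induct) (auto dest: step)
  have "u = m" if "u < nV H" for u
  proof -
    have "(m, 0) \<in> (adj H)\<^sup>*" "(0, u) \<in> (adj H)\<^sup>*"
      using conn m that rtrancl_adj_sym unfolding gconnected_def by blast+
    then have "(m, u) \<in> (adj H)\<^sup>*"
      by (rule rtrancl_trans)
    then show ?thesis
      using path by blast
  qed
  then show ?thesis
    using m by (metis less_one linorder_neqE_nat not_less0)
qed

lemma stab_single_vertex:
  assumes v: "valid g n H" and n1: "nV H = 1"
  shows "stab H 0 = 2 * g + n"
proof -
  have "\<forall>e\<in>set (edgs H). fst e = 0 \<and> snd e = 0" "\<forall>u\<in>set (mks H). u = 0"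
    using valid_bounded[OF v] n1 by (auto simp: bounded_graph_def)
  then have "edge_val H 0 = 2 * length (edgs H)" "mark_val H 0 = n"
    using v by (simp_all add: edge_val_def mark_val_def filter_id_conv valid_def)
  moreover obtain w where "wts H = [w]"
    using n1 by (auto simp: nV_def length_Suc_conv)
  ultimately show ?thesis
    using v n1 by (simp add: stab_def val_eq_edge_mark valid_def wt_def)
qed

lemma two_nonloop_edges_at:
  assumes val: "edge_val G m = 2" and k1: "k1 < length (edgs G)" "incid (edgs G ! k1) m = 1"
  obtains k2 where "k2 < length (edgs G)" "k2 \<noteq> k1" "incid (edgs G ! k2) m = 1"
    "\<And>k. k < length (edgs G) \<Longrightarrow> k \<noteq> k1 \<Longrightarrow> k \<noteq> k2 \<Longrightarrow> incid (edgs G ! k) m = 0"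
proof -
  let ?L = "length (edgs G)"
  have "(\<Sum>k\<in>{..<?L} - {k1}. incid (edgs G ! k) m) = 1"
    using sum.remove[of "{..<?L}" k1 "\<lambda>k. incid (edgs G ! k) m"] k1 val
    by (simp add: edge_val_eq_sum_incid)
  then obtain k2 where "k2 \<in> {..<?L} - {k1}" "incid (edgs G ! k2) m = 1"
    "\<forall>k\<in>{..<?L} - {k1}. k2 \<noteq> k \<longrightarrow> incid (edgs G ! k) m = 0"
    using sum_eq_Suc0_iff[of "{..<?L} - {k1}" "\<lambda>k. incid (edgs G ! k) m"] by auto
  then show ?thesis
    using that by auto
qed

lemma bivalent_vertex_if_unstable_mark:
  assumes v: "valid g 1 H" and g2: "2 \<le> g" and unstable: "stab H (hd (mks H)) \<le> 3"
  shows "\<exists>i1 i2. bivalent_vertex H (hd (mks H)) i1 i2"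
proof -
  let ?m = "hd (mks H)" and ?L = "length (edgs H)"
  have bH: "bounded_graph H" and m: "?m < nV H"
    using valid_bounded[OF v] mark_less_valid1[OF v] .
  have "\<exists>k1 < ?L. incid (edgs H ! k1) ?m = 1"
  proof (rule ccontr)
    assume "\<not> (\<exists>k1 < ?L. incid (edgs H ! k1) ?m = 1)"
    then have "e \<in> set (edgs H) \<Longrightarrow> ?m \<in> ends e \<Longrightarrow> fst e = snd e" for e
      by (auto simp: in_set_conv_nth incid_def ends_def split: if_splits)
    then have "nV H = 1"
      using single_vertex_if_only_loops_at v m by (auto simp: valid_def)
    then show False
      using stab_single_vertex[OF v] m unstable g2 by simp
  qed
  then obtain k1 where k1: "k1 < ?L" "incid (edgs H ! k1) ?m = 1"
    by blast
  have "1 \<le> edge_val H ?m"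
    using k1 member_le_sum[of k1 "{..<?L}" "\<lambda>k. incid (edgs H ! k) ?m"]
    by (simp add: edge_val_eq_sum_incid)
  moreover have "stab H ?m = 2 * wt H ?m + edge_val H ?m + 1"
    using mark_val_valid1[OF v, of ?m] by (simp add: stab_def val_eq_edge_mark)
  ultimately have w0: "wt H ?m = 0" and val2: "edge_val H ?m = 2"
    using unstable valid_stab[OF v m] by presburger+
  obtain k2 where k2: "k2 < ?L" "k2 \<noteq> k1" "incid (edgs H ! k2) ?m = 1"
    and rest: "\<And>k. k < ?L \<Longrightarrow> k \<noteq> k1 \<Longrightarrow> k \<noteq> k2 \<Longrightarrow> incid (edgs H ! k) ?m = 0"
    using two_nonloop_edges_at[OF val2 k1] by blast
  have "bivalent_vertex H ?m (min k1 k2) (max k1 k2)"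
  proof
    show "?m \<notin> ends (edgs H ! k)" if "k < ?L" "k \<noteq> min k1 k2" "k \<noteq> max k1 k2" for k
      using that rest incid_eq_0 by (metis max_def min_def)
    have "end1 H k \<noteq> end2 H k \<and> ?m \<in> {end1 H k, end2 H k}" if "k \<in> {k1, k2}" for k
      using that incid_eq_1[of "edgs H ! k1"] incid_eq_1[of "edgs H ! k2"] k1 k2
      by (auto simp: end1_def end2_def)
    then show "end1 H (min k1 k2) \<noteq> end2 H (min k1 k2)" "end1 H (max k1 k2) \<noteq> end2 H (max k1 k2)"
      "?m \<in> {end1 H (min k1 k2), end2 H (min k1 k2)}" "?m \<in> {end1 H (max k1 k2), end2 H (max k1 k2)}"
      by (simp_all add: min_def max_def)
  qed (use bH k1 k2 w0 m in auto)
  then show ?thesis by blast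
qed

lemma mark_contract_valid1: "valid g 1 H \<Longrightarrow> hd (mks (contract H i)) = contract_vmap H i (hd (mks H))"
  using mks_valid1[of g H] by (auto simp: mks_contract)

lemma lin_sgen_dgen_stable_mark:
  assumes v: "valid g 1 H" and stable: "3 < stab H (hd (mks H))"
  shows "lin sgen (dgen H) = lin dgen (sgen H)"
proof -
  have "sgen (contract H i) = delta (unmark (contract H i))" if "i < length (edgs H)" for i
    using stab_contract_vmap_ge[OF valid_bounded[OF v] that mark_less_valid1[OF v]] valid_stab[OF v]
      stable by (simp add: sgen_def mark_contract_valid1[OF v])
  then have "lin sgen (dgen H) = (\<lambda>y. \<Sum>i<length (edgs H). (-1)^i * delta (unmark (contract H i)) y)"
    unfolding lin_dgen by (intro ext sum.cong) auto
  also have "\<dots> = lin dgen (sgen H)"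
    using stable by (simp add: sgen_def lin_delta dgen_def contract_unmark)
  finally show ?thesis .
qed

text \<open>Only the contractions of the two edges at \<open>m\<close> survive \<open>s\<close>; they are isomorphic, and their
  signs in the differential differ exactly by the sign of the cyclic relabelling of the edges.\<close>
lemma (in bivalent_vertex) lin_sgen_dgen_rels:
  assumes v: "valid g 1 H" and mark: "hd (mks H) = m" and unstable: "stab H m \<le> 3"
    and len: "length (edgs H) = Suc e"
  shows "(\<lambda>y. lin sgen (dgen H) y - lin dgen (sgen H) y) \<in> rels g 0 e"
proof -
  let ?K1 = "unmark (contract H i1)" and ?K2 = "unmark (contract H i2)"
  have stab_mark: "3 < stab (contract H i) (hd (mks (contract H i)))" if "i \<in> {i1, i2}" for i
  proof -
    have "i < length (edgs H)" "end1 H i \<noteq> end2 H i" "m \<in> {end1 H i, end2 H i}"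
      using that i1_less i2_less nonloop1 nonloop2 at1 at2 by auto
    then have "stab H m < stab (contract H i) (contract_vmap H i m)"
      using stab_contract_vmap_gt[OF bounded _ m_less] valid_stab[OF v] by blast
    then show ?thesis
      using valid_stab[OF v m_less] by (simp add: mark_contract_valid1[OF v] mark)
  qed
  have sgen_edge: "sgen (contract H i) = delta (unmark (contract H i))" if "i \<in> {i1, i2}" for i
    using stab_mark[OF that] by (simp add: sgen_def)
  have sgen_other: "sgen (contract H i) = (\<lambda>_. 0)" if "i < length (edgs H)" "i \<noteq> i1" "i \<noteq> i2" for i
    using stab_contract_vmap_eq[OF bounded that(1) m_less] not_at[OF that] unstable
    by (simp add: sgen_def mark_contract_valid1[OF v] mark ends_def end1_def end2_def)
  have "lin sgen (dgen H) = (\<lambda>y. \<Sum>i\<in>{i1, i2}. (-1)^i * sgen (contract H i) y)"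
    unfolding lin_dgen by (intro ext sum.mono_neutral_right) (use i1_less i2_less sgen_other in auto)
  also have "\<dots> = (\<lambda>y. (-1)^i1 * (delta ?K1 y - of_int (sign (shift_cycle i1 (i2 - 1))) * delta ?K2 y))"
    using i1_less_i2 sgen_edge minus_one_power_shift_cycle[OF i1_less_i2]
    by (simp add: algebra_simps)
  finally have "(\<lambda>y. lin sgen (dgen H) y - lin dgen (sgen H) y)
      = (\<lambda>y. (-1)^i1 * (delta ?K1 y - of_int (sign (shift_cycle i1 (i2 - 1))) * delta ?K2 y))"
    using unstable by (simp add: sgen_def mark lin_zero)
  also have "\<dots> \<in> rels g 0 e"
  proof (intro rels_scale iso_rel_in_rels)
    show "iso ?K1 ?K2 vmap (shift_cycle i1 (i2 - 1))"
      by (rule iso_contract)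
    show "valid g 0 ?K1"
      using valid_unmark[OF valid_contract_nonloop[OF v i1_less nonloop1]] stab_mark by simp
    show "length (edgs ?K1) = e"
      using length_edgs_contract[OF bounded i1_less] len by simp
  qed
  finally show ?thesis .
qed

lemma lin_sgen_dgen_rels:
  assumes v: "valid g 1 H" and len: "length (edgs H) = Suc e" and g2: "2 \<le> g"
  shows "(\<lambda>y. lin sgen (dgen H) y - lin dgen (sgen H) y) \<in> rels g 0 e"
proof (cases "3 < stab H (hd (mks H))")
  case True
  then show ?thesis
    using lin_sgen_dgen_stable_mark[OF v] by (simp add: rels_def qspan_zero)
next
  case False
  then obtain i1 i2 where "bivalent_vertex H (hd (mks H)) i1 i2"
    using bivalent_vertex_if_unstable_mark[OF v g2] by auto
  then show ?thesis
    using bivalent_vertex.lin_sgen_dgen_rels[OF _ v refl _ len] False by simp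
qed

section \<open>Injectivity on homology\<close>

lemma lin_sgen_chains: "lin sgen ` chains g 1 e \<subseteq> chains g 0 e"
  using lin_chains_qspan[of _ g 1 e sgen] sgen_chains[of g _ e] unfolding chains_def[of g 0 e]
  by blast

lemma lin_sgen_rels: "lin sgen ` rels g 1 e \<subseteq> rels g 0 e"
  using lin_rels_qspan[of _ g 1 e sgen] sgen_rels[of g _ e] unfolding rels_def[of g 0 e] by blast

lemma lin_sgen_posw: "lin sgen ` posw g 1 e \<subseteq> posw g 0 e"
  using lin_posw_qspan[of _ g 1 e sgen] sgen_posw[of g _ e] unfolding posw_def[of g 0 e] by blast

lemma lin_sgen_lin_tgen:
  assumes z: "z \<in> chains g 0 e"
  shows "lin sgen (lin tgen z) = (\<lambda>y. (2 * of_nat g - 2) * z y)"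
proof -
  have "lin sgen (lin tgen z) = lin (\<lambda>x. lin sgen (tgen x)) z"
    using z by (simp add: lin_lin finsupp_chains finsupp_tgen)
  also have "\<dots> = lin (\<lambda>x y. (2 * of_nat g - 2) * delta x y) z"
    using supp_chains[OF z] by (intro lin_cong) (auto simp: lin_sgen_tgen)
  also have "\<dots> = (\<lambda>y. (2 * of_nat g - 2) * z y)"
    using z by (simp add: lin_scale_fun lin_delta_self finsupp_chains)
  finally show ?thesis .
qed

lemma lin_sgen_lin_dgen_rels:
  assumes b: "b \<in> chains g 1 (Suc e)" and g2: "2 \<le> g"
  shows "(\<lambda>y. lin sgen (lin dgen b) y - lin dgen (lin sgen b) y) \<in> rels g 0 e"
proof -
  have "(\<lambda>y. lin sgen (lin dgen b) y - lin dgen (lin sgen b) y)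
      = lin (\<lambda>x y. lin sgen (dgen x) y - lin dgen (sgen x) y) b"
    using b by (simp add: lin_lin lin_diff_fun finsupp_chains finsupp_dgen finsupp_sgen)
  also have "\<dots> \<in> rels g 0 e"
    using b lin_sgen_dgen_rels[OF _ _ g2] unfolding rels_def by (rule lin_chains_qspan)
  finally show ?thesis .
qed

text \<open>Since \<open>s \<circ> t = (2g - 2)\<close> and \<open>s\<close> commutes with the differentials up to relations, a
  chain whose image under \<open>t\<close> is a boundary up to an error \<open>r\<close> is itself a boundary up to
  relations and the rescaled image of \<open>r\<close> under \<open>s\<close>.\<close>
lemma boundary_of_lin_tgen:
  assumes g2: "2 \<le> g" and z: "z \<in> chains g 0 e" and b: "b \<in> chains g 1 (Suc e)" and r: "finsupp r"
    and eq: "lin tgen z = (\<lambda>y. lin dgen b y + r y)"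
  obtains b0 \<rho> where "b0 \<in> chains g 0 (Suc e)" "\<rho> \<in> rels g 0 e"
    "z = (\<lambda>y. lin dgen b0 y + (\<rho> y + (1 / (2 * of_nat g - 2)) * lin sgen r y))"
proof -
  define c :: rat where "c = 2 * of_nat g - 2"
  have "c \<noteq> 0"
    using g2 by (simp add: c_def)
  define b' where "b' = lin sgen b"
  have b': "b' \<in> chains g 0 (Suc e)"
    using lin_sgen_chains b unfolding b'_def by blast
  define \<rho> where "\<rho> = (\<lambda>y. lin sgen (lin dgen b) y - lin dgen b' y)"
  have "(\<lambda>y. c * z y) = lin sgen (lin tgen z)"
    using lin_sgen_lin_tgen[OF z] by (simp add: c_def)
  also have "\<dots> = (\<lambda>y. lin sgen (lin dgen b) y + lin sgen r y)"
    unfolding eq using b r by (simp add: lin_add finsupp_lin finsupp_chains finsupp_dgen)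
  finally have "z = (\<lambda>y. (1 / c) * lin dgen b' y + ((1 / c) * \<rho> y + (1 / c) * lin sgen r y))"
    using \<open>c \<noteq> 0\<close> unfolding \<rho>_def by (simp add: fun_eq_iff field_simps)
  moreover have "(\<lambda>y. (1 / c) * b' y) \<in> chains g 0 (Suc e)"
    using b' unfolding chains_def by (rule qspan_scale)
  moreover have "(\<lambda>y. (1 / c) * \<rho> y) \<in> rels g 0 e"
    using lin_sgen_lin_dgen_rels[OF b g2] unfolding \<rho>_def b'_def by (rule rels_scale)
  ultimately show ?thesis
    using that[of "\<lambda>y. (1 / c) * b' y" "\<lambda>y. (1 / c) * \<rho> y"]
      lin_scale[OF finsupp_chains[OF b'], of dgen "1 / c"] by (simp add: c_def)
qed

lemma saddI: "x \<in> A \<Longrightarrow> z \<in> B \<Longrightarrow> c = (\<lambda>y. x y + z y) \<Longrightarrow> c \<in> sadd A B"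
  unfolding sadd_def by blast

lemma saddE:
  assumes "c \<in> sadd A B"
  obtains x z where "x \<in> A" "z \<in> B" "c = (\<lambda>y. x y + z y)"
  using assms unfolding sadd_def by blast

lemma lin_tgen_reflects_boundaries:
  assumes g2: "2 \<le> g" and z: "z \<in> chains g 0 e" and t: "lin tgen z \<in> sadd (bnd g 1 e) (rels g 1 e)"
  shows "z \<in> sadd (bnd g 0 e) (rels g 0 e)"
proof -
  obtain \<beta> r where \<beta>: "\<beta> \<in> bnd g 1 e" and r: "r \<in> rels g 1 e"
    and eq: "lin tgen z = (\<lambda>y. \<beta> y + r y)"
    using t by (rule saddE)
  obtain b where b: "b \<in> chains g 1 (Suc e)" and "\<beta> = lin dgen b"
    using \<beta> unfolding bnd_def by blast
  with eq have eq: "lin tgen z = (\<lambda>y. lin dgen b y + r y)"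
    by simp
  obtain b0 \<rho> where b0: "b0 \<in> chains g 0 (Suc e)" and \<rho>: "\<rho> \<in> rels g 0 e"
    and zz: "z = (\<lambda>y. lin dgen b0 y + (\<rho> y + (1 / (2 * of_nat g - 2)) * lin sgen r y))"
    using boundary_of_lin_tgen[OF g2 z b finsupp_rels[OF r] eq] .
  show ?thesis
  proof (rule saddI[OF _ _ zz])
    show "lin dgen b0 \<in> bnd g 0 e"
      unfolding bnd_def using b0 by blast
    show "(\<lambda>y. \<rho> y + 1 / (2 * of_nat g - 2) * lin sgen r y) \<in> rels g 0 e"
      using lin_sgen_rels r by (intro rels_add[OF \<rho>] rels_scale) blast
  qed
qed

lemma lin_tgen_reflects_boundaries_mod_posw:
  assumes g2: "2 \<le> g" and z: "z \<in> chains g 0 e"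
    and t: "lin tgen z \<in> sadd (sadd (bnd g 1 e) (rels g 1 e)) (posw g 1 e)"
  shows "z \<in> sadd (sadd (bnd g 0 e) (rels g 0 e)) (posw g 0 e)"
proof -
  obtain \<beta> r p where \<beta>: "\<beta> \<in> bnd g 1 e" and r: "r \<in> rels g 1 e" and p: "p \<in> posw g 1 e"
    and eq: "lin tgen z = (\<lambda>y. \<beta> y + r y + p y)"
    using t by (elim saddE) simp
  obtain b where b: "b \<in> chains g 1 (Suc e)" and "\<beta> = lin dgen b"
    using \<beta> unfolding bnd_def by blast
  with eq have eq: "lin tgen z = (\<lambda>y. lin dgen b y + (r y + p y))"
    by (simp add: add.assoc)
  have rp: "finsupp r" "finsupp p"
    using finsupp_rels[OF r] finsupp_posw[OF p] .
  let ?c = "1 / (2 * of_nat g - 2) :: rat"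
  obtain b0 \<rho> where b0: "b0 \<in> chains g 0 (Suc e)" and \<rho>: "\<rho> \<in> rels g 0 e"
    and zz: "z = (\<lambda>y. lin dgen b0 y + (\<rho> y + ?c * lin sgen (\<lambda>y. r y + p y) y))"
    using boundary_of_lin_tgen[OF g2 z b finsupp_add[OF rp] eq] .
  then have split: "z = (\<lambda>y. (lin dgen b0 y + (\<rho> y + ?c * lin sgen r y)) + ?c * lin sgen p y)"
    using rp by (simp add: lin_add algebra_simps add_divide_distrib)
  show ?thesis
  proof (rule saddI[OF saddI[OF _ _ refl] _ split])
    show "lin dgen b0 \<in> bnd g 0 e"
      unfolding bnd_def using b0 by blast
    show "(\<lambda>y. \<rho> y + ?c * lin sgen r y) \<in> rels g 0 e"
      using lin_sgen_rels r by (intro rels_add[OF \<rho>] rels_scale) blast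
    show "(\<lambda>y. ?c * lin sgen p y) \<in> posw g 0 e"
      using lin_sgen_posw p unfolding posw_def by (intro qspan_scale) blast
  qed
qed

theorem theorem1p7:
  fixes g :: nat
  assumes "g \<ge> 2"
  shows "(\<forall>e. lin tgen ` chains g 0 e \<subseteq> chains g 1 e)
       \<and> (\<forall>e. lin tgen ` rels g 0 e \<subseteq> rels g 1 e)
       \<and> (\<forall>e. \<forall>c\<in>chains g 0 (Suc e).
             (\<lambda>y. lin tgen (lin dgen c) y - lin dgen (lin tgen c) y) \<in> rels g 1 e)
       \<and> (\<forall>e. lin tgen ` posw g 0 e \<subseteq> posw g 1 e)
       \<and> (\<forall>e. \<forall>z\<in>chains g 0 e. lin dgen z \<in> rels g 0 (e - 1) \<longrightarrow>
             lin tgen z \<in> sadd (bnd g 1 e) (rels g 1 e) \<longrightarrow>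
             z \<in> sadd (bnd g 0 e) (rels g 0 e))
       \<and> (\<forall>e. \<forall>z\<in>chains g 0 e. lin dgen z \<in> sadd (rels g 0 (e - 1)) (posw g 0 (e - 1)) \<longrightarrow>
             lin tgen z \<in> sadd (sadd (bnd g 1 e) (rels g 1 e)) (posw g 1 e) \<longrightarrow>
             z \<in> sadd (sadd (bnd g 0 e) (rels g 0 e)) (posw g 0 e))"
proof (intro conjI allI ballI impI)
  fix e c
  show "lin tgen ` chains g 0 e \<subseteq> chains g 1 e" by (rule lin_tgen_chains)
  show "lin tgen ` rels g 0 e \<subseteq> rels g 1 e" by (rule lin_tgen_rels)
  show "lin tgen ` posw g 0 e \<subseteq> posw g 1 e" by (rule lin_tgen_posw)
  assume "c \<in> chains g 0 (Suc e)"
  then show "(\<lambda>y. lin tgen (lin dgen c) y - lin dgen (lin tgen c) y) \<in> rels g 1 e"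
    by (simp add: lin_tgen_lin_dgen rels_def qspan_zero)
next
  fix e z
  assume "z \<in> chains g 0 e"
  then show "lin tgen z \<in> sadd (bnd g 1 e) (rels g 1 e) \<Longrightarrow> z \<in> sadd (bnd g 0 e) (rels g 0 e)"
    and "lin tgen z \<in> sadd (sadd (bnd g 1 e) (rels g 1 e)) (posw g 1 e) \<Longrightarrow>
      z \<in> sadd (sadd (bnd g 0 e) (rels g 0 e)) (posw g 0 e)"
    using lin_tgen_reflects_boundaries[OF assms] lin_tgen_reflects_boundaries_mod_posw[OF assms]
    by blast+
qed

end
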